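(* For every $k\in\mathbb Z$ there is an isomorphism of (strict) monoidal categories $\omega:\mathcal{H}eis_k\to(\mathcal{H}eis_{-k})^{\mathrm{op}}$ which interchanges the objects $\uparrow$ and $\downarrow$ and is defined on generating morphisms by $x\mapsto x'$, $s\mapsto -s'$, $c\mapsto d$ and $d\mapsto c$, where $x',s'$ (and the $c,d$ on the right) denote the morphisms of $\mathcal{H}eis_{-k}$ defined in the context.
   Context: Fix a commutative ring $\Bbbk$. For an integer $m$, the Heisenberg category $\mathcal{H}eis_m$ is the strict $\Bbbk$-linear monoidal category generated by objects $\uparrow,\downarrow$ and morphisms $x:\uparrow\to\uparrow$, $s:\uparrow\otimes\uparrow\to\uparrow\otimes\uparrow$, $c:\mathbf 1\to\downarrow\otimes\uparrow$, $d:\uparrow\otimes\downarrow\to\mathbf 1$ ($\mathbf 1$ the unit object, $1_X$ identities, $\circ$ composition, $x^n$ the $n$-fold composite), subject to the following relations, where $t:=(1_\downarrow\otimes 1_\uparrow\otimes d)\circ(1_\downarrow\otimes s\otimes 1_\downarrow)\circ(c\otimes 1_\uparrow\otimes 1_\downarrow):\uparrow\otimes\downarrow\to\downarrow\otimes\uparrow$: (H) $s\circ s=1_{\uparrow\otimes\uparrow}$; $(s\otimes 1_\uparrow)\circ(1_\uparrow\otimes s)\circ(s\otimes 1_\uparrow)=(1_\uparrow\otimes s)\circ(s\otimes 1_\uparrow)\circ(1_\uparrow\otimes s)$; $(x\otimes 1_\uparrow)\circ s-s\circ(1_\uparrow\otimes x)=1_{\uparrow\otimes\uparrow}$. (A)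 $(d\otimes 1_\uparrow)\circ(1_\uparrow\otimes c)=1_\uparrow$ and $(1_\downarrow\otimes d)\circ(c\otimes 1_\downarrow)=1_\downarrow$. (I) If $m\ge0$, the morphism $\uparrow\otimes\downarrow\to(\downarrow\otimes\uparrow)\oplus\mathbf 1^{\oplus m}$ with components $t$ and $d\circ(x^r\otimes 1_\downarrow)$, $r=0,\dots,m-1$, is an isomorphism in the additive envelope; if $m<0$, the morphism $(\uparrow\otimes\downarrow)\oplus\mathbf 1^{\oplus(-m)}\to\downarrow\otimes\uparrow$ with components $t$ and $(1_\downarrow\otimes x^r)\circ c$, $r=0,\dots,-m-1$, is an isomorphism in the additive envelope (formally, the entries of a two-sided inverse matrix are adjoined as generators). In $\mathcal{H}eis_m$ define $x':=(1_\downarrow\otimes d)\circ(1_\downarrow\otimes x\otimes 1_\downarrow)\circ(c\otimes 1_\downarrow):\downarrow\to\downarrow$ and $s':=(1_\downarrow\otimes 1_\downarrow\otimes d)\circ(1_\downarrow\otimes t\otimes 1_\downarrow)\circ(c\otimes 1_\downarrow\otimes 1_\downarrow):\downarrow\otimes\downarrow\to\downarrow\otimes\downarrow$ (the right mates of $x$ and $s$). $\mathcal C^{\mathrm{op}}$ denotes the opposite category with the same tensor product. *)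

theory Defs
  imports Main
begin

text \<open>
  Objects: words in up/down, encoded as bool lists (True = up, False = down);
  tensor product of objects is list append, the unit object is [].
  Morphism terms: formal expressions built from identities, the generators
  x, s, c, d, the generators adjoined for the inversion relation (I)
  (Gu and Gv r, the entries of the two-sided inverse matrix), composition
  (Comp f g = f after g), tensor product, zero, sum and scalar multiplication.
  The morphisms of Heis_m from a to b are the well-typed terms modulo the
  congruence heq m generated by the axioms of a strict k-linear monoidal category
  and the relations (H), (A), (I).
\<close>

type_synonym obj = "bool list"

datatype 'k mor =
    Id obj | Gx | Gs | Gc | Gd | Gu | Gv nat
  | Comp "'k mor" "'k mor" | Tens "'k mor" "'k mor"
  | Zer obj obj | Add "'k mor" "'k mor" | Smul 'k "'k mor"

text \<open>For m \<ge> 0 the inverse of the column (t ; d(x^r\<otimes>1)) : \<up>\<down> \<rightarrow> \<down>\<up> \<oplus> 1^m is the row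
  (Gu, Gv 0, ..., Gv (m-1)) with Gu : \<down>\<up> \<rightarrow> \<up>\<down>, Gv r : 1 \<rightarrow> \<up>\<down>.
  For m < 0 the inverse of the row (t, (1\<otimes>x^r)c) : \<up>\<down> \<oplus> 1^(-m) \<rightarrow> \<down>\<up> is the column
  (Gu ; Gv 0 ; ... ; Gv (-m-1)) with Gu : \<down>\<up> \<rightarrow> \<up>\<down>, Gv r : \<down>\<up> \<rightarrow> 1.\<close>

inductive hty :: "int \<Rightarrow> 'k mor \<Rightarrow> obj \<Rightarrow> obj \<Rightarrow> bool" for m :: int where
  ty_id: "hty m (Id a) a a"
| ty_x: "hty m Gx [True] [True]"
| ty_s: "hty m Gs [True,True] [True,True]"
| ty_c: "hty m Gc [] [False,True]"
| ty_d: "hty m Gd [True,False] []"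
| ty_u: "hty m Gu [False,True] [True,False]"
| ty_v_pos: "0 \<le> m \<Longrightarrow> int r < m \<Longrightarrow> hty m (Gv r) [] [True,False]"
| ty_v_neg: "m < 0 \<Longrightarrow> int r < - m \<Longrightarrow> hty m (Gv r) [False,True] []"
| ty_comp: "hty m f b c \<Longrightarrow> hty m g a b \<Longrightarrow> hty m (Comp f g) a c"
| ty_tens: "hty m f a b \<Longrightarrow> hty m g c d \<Longrightarrow> hty m (Tens f g) (a @ c) (b @ d)"
| ty_zer: "hty m (Zer a b) a b"
| ty_add: "hty m f a b \<Longrightarrow> hty m g a b \<Longrightarrow> hty m (Add f g) a b"
| ty_smul: "hty m f a b \<Longrightarrow> hty m (Smul r f) a b"

fun xpow :: "nat \<Rightarrow> 'k mor" where
  "xpow 0 = Id [True]"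
| "xpow (Suc n) = Comp Gx (xpow n)"

definition tmor :: "'k mor" where
  "tmor = Comp (Tens (Id [False,True]) Gd)
            (Comp (Tens (Id [False]) (Tens Gs (Id [False])))
                  (Tens Gc (Id [True,False])))"

definition dx :: "nat \<Rightarrow> 'k mor" where
  "dx r = Comp Gd (Tens (xpow r) (Id [False]))"

definition cx :: "nat \<Rightarrow> 'k mor" where
  "cx r = Comp (Tens (Id [False]) (xpow r)) Gc"

definition msum :: "obj \<Rightarrow> obj \<Rightarrow> 'k mor list \<Rightarrow> 'k mor" where
  "msum a b fs = foldr Add fs (Zer a b)"

text \<open>x' : \<down> \<rightarrow> \<down> and s' : \<down>\<down> \<rightarrow> \<down>\<down> (right mates of x and s)\<close>
definition xprime :: "'k mor" where
  "xprime = Comp (Tens (Id [False]) Gd)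
             (Comp (Tens (Id [False]) (Tens Gx (Id [False])))
                   (Tens Gc (Id [False])))"

definition sprime :: "'k mor" where
  "sprime = Comp (Tens (Id [False,False]) Gd)
             (Comp (Tens (Id [False]) (Tens tmor (Id [False])))
                   (Tens Gc (Id [False,False])))"

inductive heq :: "int \<Rightarrow> 'k::comm_ring_1 mor \<Rightarrow> 'k mor \<Rightarrow> bool" for m :: int where
  eq_refl: "hty m f a b \<Longrightarrow> heq m f f"
| eq_sym: "heq m f g \<Longrightarrow> heq m g f"
| eq_trans: "heq m f g \<Longrightarrow> heq m g h \<Longrightarrow> heq m f h"
| cong_comp: "heq m f f' \<Longrightarrow> heq m g g' \<Longrightarrow> hty m f b c \<Longrightarrow> hty m g a b
     \<Longrightarrow> heq m (Comp f g) (Comp f' g')"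
| cong_tens: "heq m f f' \<Longrightarrow> heq m g g' \<Longrightarrow> heq m (Tens f g) (Tens f' g')"
| cong_add: "heq m f f' \<Longrightarrow> heq m g g' \<Longrightarrow> hty m f a b \<Longrightarrow> hty m g a b
     \<Longrightarrow> heq m (Add f g) (Add f' g')"
| cong_smul: "heq m f f' \<Longrightarrow> heq m (Smul r f) (Smul r f')"
| comp_assoc: "hty m f c d \<Longrightarrow> hty m g b c \<Longrightarrow> hty m h a b
     \<Longrightarrow> heq m (Comp (Comp f g) h) (Comp f (Comp g h))"
| comp_idl: "hty m f a b \<Longrightarrow> heq m (Comp (Id b) f) f"
| comp_idr: "hty m f a b \<Longrightarrow> heq m (Comp f (Id a)) f"
| tens_assoc: "hty m f a b \<Longrightarrow> hty m g c d \<Longrightarrow> hty m h e p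
     \<Longrightarrow> heq m (Tens (Tens f g) h) (Tens f (Tens g h))"
| tens_unitl: "hty m f a b \<Longrightarrow> heq m (Tens (Id []) f) f"
| tens_unitr: "hty m f a b \<Longrightarrow> heq m (Tens f (Id [])) f"
| tens_id: "heq m (Tens (Id a) (Id b)) (Id (a @ b))"
| interchange: "hty m f a b \<Longrightarrow> hty m g b c \<Longrightarrow> hty m h d e \<Longrightarrow> hty m k e p
     \<Longrightarrow> heq m (Comp (Tens g k) (Tens f h)) (Tens (Comp g f) (Comp k h))"
| add_assoc: "hty m f a b \<Longrightarrow> hty m g a b \<Longrightarrow> hty m h a b
     \<Longrightarrow> heq m (Add (Add f g) h) (Add f (Add g h))"
| add_comm: "hty m f a b \<Longrightarrow> hty m g a b \<Longrightarrow> heq m (Add f g) (Add g f)"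
| add_zero: "hty m f a b \<Longrightarrow> heq m (Add f (Zer a b)) f"
| add_neg: "hty m f a b \<Longrightarrow> heq m (Add f (Smul (-1) f)) (Zer a b)"
| smul_add: "hty m f a b \<Longrightarrow> hty m g a b
     \<Longrightarrow> heq m (Smul r (Add f g)) (Add (Smul r f) (Smul r g))"
| add_smul: "hty m f a b \<Longrightarrow> heq m (Smul (r + q) f) (Add (Smul r f) (Smul q f))"
| smul_smul: "hty m f a b \<Longrightarrow> heq m (Smul r (Smul q f)) (Smul (r * q) f)"
| smul_one: "hty m f a b \<Longrightarrow> heq m (Smul 1 f) f"
| comp_addl: "hty m f b c \<Longrightarrow> hty m g b c \<Longrightarrow> hty m h a b
     \<Longrightarrow> heq m (Comp (Add f g) h) (Add (Comp f h) (Comp g h))"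
| comp_addr: "hty m f b c \<Longrightarrow> hty m g a b \<Longrightarrow> hty m h a b
     \<Longrightarrow> heq m (Comp f (Add g h)) (Add (Comp f g) (Comp f h))"
| comp_smull: "hty m f b c \<Longrightarrow> hty m g a b \<Longrightarrow> heq m (Comp (Smul r f) g) (Smul r (Comp f g))"
| comp_smulr: "hty m f b c \<Longrightarrow> hty m g a b \<Longrightarrow> heq m (Comp f (Smul r g)) (Smul r (Comp f g))"
| tens_addl: "hty m f a b \<Longrightarrow> hty m g a b \<Longrightarrow> hty m h c d
     \<Longrightarrow> heq m (Tens (Add f g) h) (Add (Tens f h) (Tens g h))"
| tens_addr: "hty m f a b \<Longrightarrow> hty m g c d \<Longrightarrow> hty m h c d
     \<Longrightarrow> heq m (Tens f (Add g h)) (Add (Tens f g) (Tens f h))"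
| tens_smull: "hty m f a b \<Longrightarrow> hty m g c d \<Longrightarrow> heq m (Tens (Smul r f) g) (Smul r (Tens f g))"
| tens_smulr: "hty m f a b \<Longrightarrow> hty m g c d \<Longrightarrow> heq m (Tens f (Smul r g)) (Smul r (Tens f g))"
| H_ss: "heq m (Comp Gs Gs) (Id [True,True])"
| H_braid: "heq m (Comp (Tens Gs (Id [True])) (Comp (Tens (Id [True]) Gs) (Tens Gs (Id [True]))))
                  (Comp (Tens (Id [True]) Gs) (Comp (Tens Gs (Id [True])) (Tens (Id [True]) Gs)))"
| H_dot: "heq m (Add (Comp (Tens Gx (Id [True])) Gs) (Smul (-1) (Comp Gs (Tens (Id [True]) Gx))))
                (Id [True,True])"
| A_up: "heq m (Comp (Tens Gd (Id [True])) (Tens (Id [True]) Gc)) (Id [True])"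
| A_down: "heq m (Comp (Tens (Id [False]) Gd) (Tens Gc (Id [False]))) (Id [False])"
  \<comment> \<open>relations (I), m \<ge> 0: (Gu, Gv 0..m-1) is a two-sided inverse of (t ; dx 0..m-1)\<close>
| I_pos1: "0 \<le> m \<Longrightarrow> heq m (Add (Comp Gu tmor)
              (msum [True,False] [True,False] (map (\<lambda>r. Comp (Gv r) (dx r)) [0..<nat m])))
            (Id [True,False])"
| I_pos2: "0 \<le> m \<Longrightarrow> heq m (Comp tmor Gu) (Id [False,True])"
| I_pos3: "0 \<le> m \<Longrightarrow> int r < m \<Longrightarrow> heq m (Comp tmor (Gv r)) (Zer [] [False,True])"
| I_pos4: "0 \<le> m \<Longrightarrow> int r < m \<Longrightarrow> heq m (Comp (dx r) Gu) (Zer [False,True] [])"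
| I_pos5: "0 \<le> m \<Longrightarrow> int r < m \<Longrightarrow> int q < m
     \<Longrightarrow> heq m (Comp (dx r) (Gv q)) (if r = q then Id [] else Zer [] [])"
  \<comment> \<open>relations (I), m < 0: (Gu ; Gv 0..-m-1) is a two-sided inverse of (t, cx 0..-m-1)\<close>
| I_neg1: "m < 0 \<Longrightarrow> heq m (Add (Comp tmor Gu)
              (msum [False,True] [False,True] (map (\<lambda>r. Comp (cx r) (Gv r)) [0..<nat (- m)])))
            (Id [False,True])"
| I_neg2: "m < 0 \<Longrightarrow> heq m (Comp Gu tmor) (Id [True,False])"
| I_neg3: "m < 0 \<Longrightarrow> int r < - m \<Longrightarrow> heq m (Comp Gu (cx r)) (Zer [] [True,False])"
| I_neg4: "m < 0 \<Longrightarrow> int r < - m \<Longrightarrow> heq m (Comp (Gv r) tmor) (Zer [True,False] [])"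
| I_neg5: "m < 0 \<Longrightarrow> int r < - m \<Longrightarrow> int q < - m
     \<Longrightarrow> heq m (Comp (Gv r) (cx q)) (if r = q then Id [] else Zer [] [])"

definition swap_obj :: "obj \<Rightarrow> obj" where
  "swap_obj a = map Not a"

text \<open>w induces a strict monoidal k-linear functor Heis_k \<rightarrow> (Heis_l)^op whose object
  map is swap_obj (which is bijective and strict monoidal: swap_obj (a@b) = swap_obj a @ swap_obj b),
  and this functor is an isomorphism of categories, i.e. additionally bijective on
  each hom-set (faithful and full).\<close>
definition heis_op_iso :: "int \<Rightarrow> int \<Rightarrow> ('k::comm_ring_1 mor \<Rightarrow> 'k mor) \<Rightarrow> bool" where
  "heis_op_iso k l w \<longleftrightarrow>
     (\<forall>f a b. hty k f a b \<longrightarrow> hty l (w f) (swap_obj b) (swap_obj a))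
   \<and> (\<forall>f g. heq k f g \<longrightarrow> heq l (w f) (w g))
   \<and> (\<forall>a. heq l (w (Id a)) (Id (swap_obj a)))
   \<and> (\<forall>f g a b c. hty k f b c \<longrightarrow> hty k g a b \<longrightarrow> heq l (w (Comp f g)) (Comp (w g) (w f)))
   \<and> (\<forall>f g a b c d. hty k f a b \<longrightarrow> hty k g c d \<longrightarrow> heq l (w (Tens f g)) (Tens (w f) (w g)))
   \<and> (\<forall>f g a b. hty k f a b \<longrightarrow> hty k g a b \<longrightarrow> heq l (w (Add f g)) (Add (w f) (w g)))
   \<and> (\<forall>f r a b. hty k f a b \<longrightarrow> heq l (w (Smul r f)) (Smul r (w f)))
   \<and> (\<forall>f g a b. hty k f a b \<longrightarrow> hty k g a b \<longrightarrow> heq l (w f) (w g) \<longrightarrow> heq k f g)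
   \<and> (\<forall>h a b. hty l h (swap_obj b) (swap_obj a) \<longrightarrow> (\<exists>f. hty k f a b \<and> heq l (w f) h))"

end

theory Submission
  imports Defs
begin

(*
  \<omega> is defined on terms by structural recursion, reversing composites, and shown to respect
  every defining relation. Once one knows \<omega> t = -t and \<omega> (d (x^r \<otimes> 1)) = (1 \<otimes> x^r) c
  (both by rotating strands through the zigzag identities), the relations (A) and (I) of Heis_m
  become the relations (A) and (I) of Heis_(-m). The relations (H) become, read in the opposite
  category, the relations (H) for x' and -s'; these hold because taking mates along the duality
  between \<up>...\<up> and \<down>...\<down> is additive, reverses composites and turns whiskering on one
  side into whiskering on the other. Finally \<omega> (\<omega> f) = f, so \<omega> is an isomorphism.
  The string-diagram computations take place modulo the relations that hold in every Heis_m.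
*)

fun type_comp :: "(obj \<times> obj) option \<Rightarrow> (obj \<times> obj) option \<Rightarrow> (obj \<times> obj) option" where
  "type_comp (Some (b, c)) (Some (a, b')) = (if b = b' then Some (a, c) else None)"
| "type_comp _ _ = None"

fun type_tens :: "(obj \<times> obj) option \<Rightarrow> (obj \<times> obj) option \<Rightarrow> (obj \<times> obj) option" where
  "type_tens (Some (a, b)) (Some (c, d)) = Some (a @ c, b @ d)"
| "type_tens _ _ = None"

fun type_add :: "(obj \<times> obj) option \<Rightarrow> (obj \<times> obj) option \<Rightarrow> (obj \<times> obj) option" where
  "type_add (Some t) (Some t') = (if t = t' then Some t else None)"
| "type_add _ _ = None"

fun mtype :: "int \<Rightarrow> 'k mor \<Rightarrow> (obj \<times> obj) option" where
  "mtype m (Id a) = Some (a, a)"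
| "mtype m Gx = Some ([True], [True])"
| "mtype m Gs = Some ([True,True], [True,True])"
| "mtype m Gc = Some ([], [False,True])"
| "mtype m Gd = Some ([True,False], [])"
| "mtype m Gu = Some ([False,True], [True,False])"
| "mtype m (Gv r) = (if 0 \<le> m \<and> int r < m then Some ([], [True,False])
                  else if m < 0 \<and> int r < - m then Some ([False,True], []) else None)"
| "mtype m (Comp f g) = type_comp (mtype m f) (mtype m g)"
| "mtype m (Tens f g) = type_tens (mtype m f) (mtype m g)"
| "mtype m (Zer a b) = Some (a, b)"
| "mtype m (Add f g) = type_add (mtype m f) (mtype m g)"
| "mtype m (Smul r f) = mtype m f"

lemma type_comp_eq_Some:
  "type_comp x y = Some (a, c) \<longleftrightarrow> (\<exists>b. x = Some (b, c) \<and> y = Some (a, b))"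
  by (cases x; cases y) (auto split: if_splits)

lemma type_tens_eq_Some: "type_tens x y = Some (a, b) \<longleftrightarrow>
   (\<exists>a1 a2 b1 b2. x = Some (a1, b1) \<and> y = Some (a2, b2) \<and> a = a1 @ a2 \<and> b = b1 @ b2)"
  by (cases x; cases y) auto

lemma type_add_eq_Some: "type_add x y = Some t \<longleftrightarrow> x = Some t \<and> y = Some t"
  by (cases x; cases y) auto

lemma type_None [simp]:
  "type_comp None x = None" "type_comp x None = None"
  "type_tens None x = None" "type_tens x None = None"
  "type_add None x = None" "type_add x None = None"
  by (cases x; simp)+

lemma type_comp_assoc: "type_comp (type_comp x y) z = type_comp x (type_comp y z)"
  and type_tens_assoc: "type_tens (type_tens x y) z = type_tens x (type_tens y z)"
  and type_add_commute: "type_add x y = type_add y x"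
  and type_tens_unit_left [simp]: "type_tens (Some ([], [])) x = x"
  and type_tens_unit_right [simp]: "type_tens x (Some ([], [])) = x"
  and type_comp_add_left: "type_comp (type_add x y) z = type_add (type_comp x z) (type_comp y z)"
  and type_comp_add_right: "type_comp x (type_add y z) = type_add (type_comp x y) (type_comp x z)"
  and type_tens_add_left: "type_tens (type_add x y) z = type_add (type_tens x z) (type_tens y z)"
  and type_tens_add_right: "type_tens x (type_add y z) = type_add (type_tens x y) (type_tens x z)"
  by (cases x; cases y; cases z; auto split: if_splits)+

lemma hty_iff_mtype: "hty m f a b \<longleftrightarrow> mtype m f = Some (a, b)"
proof
  assume "hty m f a b" then show "mtype m f = Some (a, b)"
    by induction auto
next
  show "mtype m f = Some (a, b) \<Longrightarrow> hty m f a b"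
  proof (induction f arbitrary: a b)
    case (Gv r) then show ?case by (auto split: if_splits intro: hty.intros)
  next
    case (Comp f g) then show ?case by (auto simp: type_comp_eq_Some intro: hty.intros)
  next
    case (Tens f g) then show ?case by (auto simp: type_tens_eq_Some intro: hty.intros)
  next
    case (Add f g) then show ?case by (auto simp: type_add_eq_Some intro: hty.intros)
  qed (auto intro: hty.intros)
qed

lemma mtype_xpow [simp]: "mtype m (xpow n) = Some ([True], [True])"
  by (induction n) auto

lemma mtype_defined_morphisms [simp]:
  "mtype m tmor = Some ([True,False], [False,True])"
  "mtype m (dx r) = Some ([True,False], [])"
  "mtype m (cx r) = Some ([], [False,True])"
  "mtype m xprime = Some ([False], [False])"
  "mtype m sprime = Some ([False,False], [False,False])"
  by (simp_all add: tmor_def dx_def cx_def xprime_def sprime_def)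

lemma mtype_msum:
  "(\<And>f. f \<in> set fs \<Longrightarrow> mtype m f = Some (a, b)) \<Longrightarrow> mtype m (msum a b fs) = Some (a, b)"
  by (induction fs) (auto simp: msum_def)

lemma heq_imp_mtype: "heq m f g \<Longrightarrow> mtype m f \<noteq> None \<and> mtype m g = mtype m f"
proof (induction rule: heq.induct)
  case I_pos1
  then have sum:
    "mtype m (msum [True, False] [True, False] (map (\<lambda>r. Comp (Gv r) (dx r)) [0..<nat m]))
      = Some ([True, False], [True, False])"
    by (intro mtype_msum) auto
  show ?case by (simp only: mtype.simps sum type_add.simps) simp
next
  case I_neg1
  then have sum:
    "mtype m (msum [False, True] [False, True] (map (\<lambda>r. Comp (cx r) (Gv r)) [0..<nat (- m)]))
      = Some ([False, True], [False, True])"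
    by (intro mtype_msum) auto
  show ?case by (simp only: mtype.simps sum type_add.simps) simp
qed (auto simp: hty_iff_mtype dx_def cx_def split: if_splits)

lemma heq_refl_mtype: "mtype m f \<noteq> None \<Longrightarrow> heq m f f"
  by (auto simp: hty_iff_mtype[symmetric] intro: heq.eq_refl)

text \<open>At m = 0 no generator Gv r is typed, so mtype 0 types exactly the terms free of Gv,
  and their type does not depend on m.\<close>

lemma mtype_zero_imp_mtype: "mtype 0 f = Some t \<Longrightarrow> \<forall>m. mtype m f = Some t"
proof
  fix m
  show "mtype 0 f = Some t \<Longrightarrow> mtype m f = Some t"
  proof (induction f arbitrary: t)
    case (Comp f g) then show ?case by (cases t) (auto simp: type_comp_eq_Some)
  next
    case (Tens f g) then show ?case by (cases t) (auto simp: type_tens_eq_Some)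
  next
    case (Add f g) then show ?case by (auto simp: type_add_eq_Some)
  qed (auto split: if_splits)
qed

section \<open>Morphisms modulo the relations common to all Heis_m\<close>

text \<open>Terms are identified when they are equal in every Heis_m in which they are typed. The
  quotient satisfies all relations except (I), and the string-diagram computations below take
  place in it. Its typing htype is mtype 0, so only Gv-free classes are typed.\<close>

definition heq_or_untyped :: "int \<Rightarrow> 'k::comm_ring_1 mor \<Rightarrow> 'k mor \<Rightarrow> bool" where
  "heq_or_untyped m f g \<longleftrightarrow> heq m f g \<or> (mtype m f = None \<and> mtype m g = None)"

definition heq_uniform :: "'k::comm_ring_1 mor \<Rightarrow> 'k mor \<Rightarrow> bool" where
  "heq_uniform f g \<longleftrightarrow> (\<forall>m. heq_or_untyped m f g)"

lemma heq_or_untyped_mtype: "heq_or_untyped m f g \<Longrightarrow> mtype m g = mtype m f"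
  unfolding heq_or_untyped_def using heq_imp_mtype by fastforce

lemma heq_or_untypedI:
  "(\<And>a b. mtype m f = Some (a, b) \<Longrightarrow> heq m f g) \<Longrightarrow> mtype m f = mtype m g
   \<Longrightarrow> heq_or_untyped m f g"
  unfolding heq_or_untyped_def by (cases "mtype m f") auto

lemma heq_uniformI:
  "(\<And>m a b. mtype m f = Some (a, b) \<Longrightarrow> heq m f g) \<Longrightarrow> (\<And>m. mtype m f = mtype m g)
   \<Longrightarrow> heq_uniform f g"
  unfolding heq_uniform_def using heq_or_untypedI by blast

lemma equivp_heq_uniform: "equivp heq_uniform"
proof (rule equivpI)
  show "reflp heq_uniform"
    unfolding reflp_def heq_uniform_def heq_or_untyped_def using heq_refl_mtype by blast
  show "symp heq_uniform"
    unfolding symp_def heq_uniform_def heq_or_untyped_def using heq.eq_sym by blast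
  show "transp heq_uniform"
    unfolding transp_def heq_uniform_def heq_or_untyped_def using heq.eq_trans heq_imp_mtype by metis
qed

lemma heq_or_untyped_Comp:
  assumes "heq_or_untyped m f f'" "heq_or_untyped m g g'"
  shows "heq_or_untyped m (Comp f g) (Comp f' g')"
  using assms heq_or_untyped_mtype[OF assms(1)] heq_or_untyped_mtype[OF assms(2)]
  by (intro heq_or_untypedI)
    (auto simp: type_comp_eq_Some heq_or_untyped_def hty_iff_mtype intro!: heq.cong_comp)

lemma heq_or_untyped_Tens:
  assumes "heq_or_untyped m f f'" "heq_or_untyped m g g'"
  shows "heq_or_untyped m (Tens f g) (Tens f' g')"
  using assms heq_or_untyped_mtype[OF assms(1)] heq_or_untyped_mtype[OF assms(2)]
  by (intro heq_or_untypedI) (auto simp: type_tens_eq_Some heq_or_untyped_def intro!: heq.cong_tens)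

lemma heq_or_untyped_Add:
  assumes "heq_or_untyped m f f'" "heq_or_untyped m g g'"
  shows "heq_or_untyped m (Add f g) (Add f' g')"
  using assms heq_or_untyped_mtype[OF assms(1)] heq_or_untyped_mtype[OF assms(2)]
  by (intro heq_or_untypedI)
    (auto simp: type_add_eq_Some heq_or_untyped_def hty_iff_mtype intro!: heq.cong_add)

lemma heq_or_untyped_Smul: "heq_or_untyped m f f' \<Longrightarrow> heq_or_untyped m (Smul r f) (Smul r f')"
  using heq_or_untyped_mtype[of m f f']
  by (intro heq_or_untypedI) (auto simp: heq_or_untyped_def intro!: heq.cong_smul)

quotient_type (overloaded) 'k hmor = "'k::comm_ring_1 mor" / heq_uniform
  by (rule equivp_heq_uniform)

lift_definition hclass :: "'k::comm_ring_1 mor \<Rightarrow> 'k hmor" is "\<lambda>f. f" .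

lift_definition qcomp :: "'k::comm_ring_1 hmor \<Rightarrow> 'k hmor \<Rightarrow> 'k hmor" (infixr "\<odot>" 55) is Comp
  unfolding heq_uniform_def using heq_or_untyped_Comp by blast

lift_definition qtens :: "'k::comm_ring_1 hmor \<Rightarrow> 'k hmor \<Rightarrow> 'k hmor" (infixr "\<otimes>" 60) is Tens
  unfolding heq_uniform_def using heq_or_untyped_Tens by blast

lift_definition qadd :: "'k::comm_ring_1 hmor \<Rightarrow> 'k hmor \<Rightarrow> 'k hmor" (infixr "\<boxplus>" 65) is Add
  unfolding heq_uniform_def using heq_or_untyped_Add by blast

lift_definition qsmul :: "'k::comm_ring_1 \<Rightarrow> 'k hmor \<Rightarrow> 'k hmor" is Smul
  unfolding heq_uniform_def using heq_or_untyped_Smul by blast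

lift_definition htype :: "'k::comm_ring_1 hmor \<Rightarrow> (obj \<times> obj) option" is "mtype 0"
  unfolding heq_uniform_def using heq_or_untyped_mtype by metis

abbreviation qid :: "obj \<Rightarrow> 'k::comm_ring_1 hmor" where "qid a \<equiv> hclass (Id a)"
abbreviation qzer :: "obj \<Rightarrow> obj \<Rightarrow> 'k::comm_ring_1 hmor" where "qzer a b \<equiv> hclass (Zer a b)"

lemma hclass_hom [simp]:
  "hclass (Comp f g) = hclass f \<odot> hclass g" "hclass (Tens f g) = hclass f \<otimes> hclass g"
  "hclass (Add f g) = hclass f \<boxplus> hclass g" "hclass (Smul r f) = qsmul r (hclass f)"
  by (transfer, rule equivp_reflp[OF equivp_heq_uniform])+

lemma htype_hclass [simp]: "htype (hclass f) = mtype 0 f"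
  by transfer simp

lemma htype_ops [simp]:
  "htype (F \<odot> G) = type_comp (htype F) (htype G)" "htype (F \<otimes> G) = type_tens (htype F) (htype G)"
  "htype (F \<boxplus> G) = type_add (htype F) (htype G)" "htype (qsmul r F) = htype F"
  by (transfer, simp)+

lemma heq_if_hclass_eq: "hclass f = hclass g \<Longrightarrow> mtype m f \<noteq> None \<Longrightarrow> heq m f g"
  by transfer (auto simp: heq_uniform_def heq_or_untyped_def)

lemmas type_eq_Some = type_comp_eq_Some type_tens_eq_Some type_add_eq_Some hty_iff_mtype[symmetric]

lemma qcomp_assoc: "(F \<odot> G) \<odot> H = F \<odot> (G \<odot> H)"
  by (transfer, rule heq_uniformI, auto simp: type_eq_Some intro: heq.comp_assoc)
    (simp_all add: type_comp_assoc)

lemma qtens_assoc: "(F \<otimes> G) \<otimes> H = F \<otimes> (G \<otimes> H)"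
  by (transfer, rule heq_uniformI, auto simp: type_eq_Some intro: heq.tens_assoc)
    (simp_all add: type_tens_assoc)

lemma qtens_unit_left: "qid [] \<otimes> F = F"
  by transfer (rule heq_uniformI, auto simp: type_eq_Some intro: heq.tens_unitl)

lemma qtens_unit_right: "F \<otimes> qid [] = F"
  by transfer (rule heq_uniformI, auto simp: type_eq_Some intro: heq.tens_unitr)

lemma qtens_id: "qid a \<otimes> qid b = qid (a @ b)"
  by transfer (rule heq_uniformI, auto simp: type_eq_Some intro: heq.tens_id)

lemma qadd_commute: "F \<boxplus> G = G \<boxplus> F"
  by (transfer, rule heq_uniformI, auto simp: type_eq_Some intro: heq.add_comm)
    (simp_all add: type_add_commute)

lemma qsmul_smul: "qsmul r (qsmul q F) = qsmul (r * q) F"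
  by transfer (rule heq_uniformI, auto simp: type_eq_Some intro: heq.smul_smul)

lemma qsmul_one: "qsmul 1 F = F"
  by transfer (rule heq_uniformI, auto simp: type_eq_Some intro: heq.smul_one)

lemma qcomp_add_left: "(F \<boxplus> G) \<odot> H = (F \<odot> H) \<boxplus> (G \<odot> H)"
  by (transfer, rule heq_uniformI, auto simp: type_eq_Some intro: heq.comp_addl)
    (simp_all add: type_comp_add_left)

lemma qcomp_add_right: "F \<odot> (G \<boxplus> H) = (F \<odot> G) \<boxplus> (F \<odot> H)"
  by (transfer, rule heq_uniformI, auto simp: type_eq_Some intro: heq.comp_addr)
    (simp_all add: type_comp_add_right)

lemma qtens_add_left: "(F \<boxplus> G) \<otimes> H = (F \<otimes> H) \<boxplus> (G \<otimes> H)"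
  by (transfer, rule heq_uniformI, auto simp: type_eq_Some intro: heq.tens_addl)
    (simp_all add: type_tens_add_left)

lemma qtens_add_right: "F \<otimes> (G \<boxplus> H) = (F \<otimes> G) \<boxplus> (F \<otimes> H)"
  by (transfer, rule heq_uniformI, auto simp: type_eq_Some intro: heq.tens_addr)
    (simp_all add: type_tens_add_right)

lemma qcomp_smul_left: "qsmul r F \<odot> G = qsmul r (F \<odot> G)"
  by transfer (rule heq_uniformI, auto simp: type_eq_Some intro: heq.comp_smull)

lemma qcomp_smul_right: "F \<odot> qsmul r G = qsmul r (F \<odot> G)"
  by transfer (rule heq_uniformI, auto simp: type_eq_Some intro: heq.comp_smulr)

lemma qtens_smul_left: "qsmul r F \<otimes> G = qsmul r (F \<otimes> G)"
  by transfer (rule heq_uniformI, auto simp: type_eq_Some intro: heq.tens_smull)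

lemma qtens_smul_right: "F \<otimes> qsmul r G = qsmul r (F \<otimes> G)"
  by transfer (rule heq_uniformI, auto simp: type_eq_Some intro: heq.tens_smulr)

lemma qcomp_id_left: "htype F = Some (a, b) \<Longrightarrow> qid b \<odot> F = F"
  by transfer (rule heq_uniformI, auto dest: mtype_zero_imp_mtype intro: heq.comp_idl[unfolded hty_iff_mtype])

lemma qcomp_id_right: "htype F = Some (a, b) \<Longrightarrow> F \<odot> qid a = F"
  by transfer (rule heq_uniformI, auto dest: mtype_zero_imp_mtype intro: heq.comp_idr[unfolded hty_iff_mtype])

lemma qadd_zero: "htype F = Some (a, b) \<Longrightarrow> F \<boxplus> qzer a b = F"
  by transfer (rule heq_uniformI, auto dest: mtype_zero_imp_mtype intro: heq.add_zero[unfolded hty_iff_mtype])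

lemma qadd_neg: "htype F = Some (a, b) \<Longrightarrow> F \<boxplus> qsmul (-1) F = qzer a b"
  by transfer (rule heq_uniformI, auto dest: mtype_zero_imp_mtype intro: heq.add_neg[unfolded hty_iff_mtype])

lemma qinterchange:
  "htype F = Some (a, b) \<Longrightarrow> htype G = Some (b, c) \<Longrightarrow> htype H = Some (d, e) \<Longrightarrow> htype K = Some (e, p)
   \<Longrightarrow> (G \<otimes> K) \<odot> (F \<otimes> H) = (G \<odot> F) \<otimes> (K \<odot> H)"
  apply transfer
  apply (drule mtype_zero_imp_mtype)+
  apply (rule heq_uniformI)
   apply (auto intro!: heq.interchange simp: hty_iff_mtype)
  done

lemma qsmul_neg_zero: "qsmul (-1) (qzer a b) = qzer a b"
proof -
  have "qzer a b = qzer a b \<boxplus> qsmul (-1) (qzer a b)"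
    by (rule qadd_neg[symmetric]) simp
  also have "\<dots> = qsmul (-1) (qzer a b) \<boxplus> qzer a b"
    by (rule qadd_commute)
  also have "\<dots> = qsmul (-1) (qzer a b)"
    by (rule qadd_zero) simp
  finally show ?thesis ..
qed

lemma qH_ss: "hclass Gs \<odot> hclass Gs = qid [True,True]"
  by transfer (rule heq_uniformI, auto intro: heq.H_ss)

lemma qH_braid: "(hclass Gs \<otimes> qid [True]) \<odot> (qid [True] \<otimes> hclass Gs) \<odot> (hclass Gs \<otimes> qid [True])
     = (qid [True] \<otimes> hclass Gs) \<odot> (hclass Gs \<otimes> qid [True]) \<odot> (qid [True] \<otimes> hclass Gs)"
  by transfer (rule heq_uniformI, auto intro: heq.H_braid)

lemma qH_dot: "((hclass Gx \<otimes> qid [True]) \<odot> hclass Gs) \<boxplus> qsmul (-1) (hclass Gs \<odot> (qid [True] \<otimes> hclass Gx))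
     = qid [True,True]"
  by transfer (rule heq_uniformI, auto intro: heq.H_dot)

lemma qA_up: "(hclass Gd \<otimes> qid [True]) \<odot> (qid [True] \<otimes> hclass Gc) = qid [True]"
  by transfer (rule heq_uniformI, auto intro: heq.A_up)

lemma qA_down: "(qid [False] \<otimes> hclass Gd) \<odot> (hclass Gc \<otimes> qid [False]) = qid [False]"
  by transfer (rule heq_uniformI, auto intro: heq.A_down)

section \<open>String diagrams as chains of whiskered morphisms\<close>

text \<open>Partial domain and codomain functions, so that the simplifier can discharge typing side
  conditions by evaluating htype.\<close>

definition htyped :: "'k::comm_ring_1 hmor \<Rightarrow> bool" where "htyped F \<longleftrightarrow> htype F \<noteq> None"
definition hdom :: "'k::comm_ring_1 hmor \<Rightarrow> obj" where "hdom F = fst (the (htype F))"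
definition hcod :: "'k::comm_ring_1 hmor \<Rightarrow> obj" where "hcod F = snd (the (htype F))"

lemma qinterchange_dom_cod:
  "htyped F \<Longrightarrow> htyped G \<Longrightarrow> htyped H \<Longrightarrow> htyped K \<Longrightarrow> hdom G = hcod F \<Longrightarrow> hdom K = hcod H
   \<Longrightarrow> (G \<otimes> K) \<odot> (F \<otimes> H) = (G \<odot> F) \<otimes> (K \<odot> H)"
  unfolding htyped_def hdom_def hcod_def by (auto intro: qinterchange)

lemma qcomp_id_left_cod: "htyped F \<Longrightarrow> hcod F = b \<Longrightarrow> qid b \<odot> F = F"
  unfolding htyped_def hcod_def by (auto intro: qcomp_id_left)

lemma qcomp_id_right_dom: "htyped F \<Longrightarrow> hdom F = a \<Longrightarrow> F \<odot> qid a = F"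
  unfolding htyped_def hdom_def by (auto intro: qcomp_id_right)

lemma qid_tens_qid_tens: "qid a \<otimes> (qid b \<otimes> F) = qid (a @ b) \<otimes> F"
  by (simp add: qtens_id qtens_assoc[symmetric])

lemma qid_tens_comp:
  "htyped A \<Longrightarrow> htyped B \<Longrightarrow> hdom A = hcod B \<Longrightarrow> qid P \<otimes> (A \<odot> B) = (qid P \<otimes> A) \<odot> (qid P \<otimes> B)"
  by (subst qinterchange_dom_cod) (auto simp: htyped_def hdom_def hcod_def qcomp_id_left_cod)

lemma qcomp_tens_qid:
  "htyped A \<Longrightarrow> htyped B \<Longrightarrow> hdom A = hcod B \<Longrightarrow> (A \<odot> B) \<otimes> qid N = (A \<otimes> qid N) \<odot> (B \<otimes> qid N)"
  by (subst qinterchange_dom_cod) (auto simp: htyped_def hdom_def hcod_def qcomp_id_left_cod)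

lemmas hmor_simps = qcomp_assoc qtens_assoc qtens_unit_left qtens_unit_right qtens_id qid_tens_qid_tens
  qcomp_id_left_cod qcomp_id_right_dom htyped_def hdom_def hcod_def qid_tens_comp qcomp_tens_qid
  qcomp_smul_left qcomp_smul_right qtens_smul_left qtens_smul_right qsmul_smul qsmul_one

text \<open>A slice (P, g, N) stands for 1_P \<otimes> g \<otimes> 1_N, and the chain [s_n, ..., s_1] on the object a
  for the composite s_n \<circ> ... \<circ> s_1 with domain a (listed from the top of the diagram down).
  chain_cod a L computes the codomain and is None exactly when the chain is ill-typed.\<close>

type_synonym 'k slice = "obj \<times> 'k hmor \<times> obj"

fun slice_mor :: "'k::comm_ring_1 slice \<Rightarrow> 'k hmor" where
  "slice_mor (P, g, N) = qid P \<otimes> g \<otimes> qid N"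

fun chain_mor :: "obj \<Rightarrow> 'k::comm_ring_1 slice list \<Rightarrow> 'k hmor" where
  "chain_mor a [] = qid a"
| "chain_mor a (s # L) = slice_mor s \<odot> chain_mor a L"

fun chain_cod :: "obj \<Rightarrow> 'k::comm_ring_1 slice list \<Rightarrow> obj option" where
  "chain_cod a [] = Some a"
| "chain_cod a ((P, g, N) # L) = (case chain_cod a L of None \<Rightarrow> None | Some b \<Rightarrow>
     (case htype g of None \<Rightarrow> None | Some (x, y) \<Rightarrow> if P @ x @ N = b then Some (P @ y @ N) else None))"

lemma htype_chain_mor: "htype (chain_mor a L) = map_option (\<lambda>b. (a, b)) (chain_cod a L)"
  by (induction L) (auto split: option.splits)

lemma chain_cod_append:
  "chain_cod a (L1 @ L2) = (case chain_cod a L2 of None \<Rightarrow> None | Some b \<Rightarrow> chain_cod b L1)"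
  by (induction L1) (auto split: option.splits)

lemma chain_mor_append:
  "chain_cod a L2 = Some b \<Longrightarrow> chain_mor a (L1 @ L2) = chain_mor b L1 \<odot> chain_mor a L2"
proof (induction L1)
  case Nil then show ?case by (simp add: qcomp_id_left_cod htyped_def hcod_def htype_chain_mor)
next
  case (Cons s L1) then show ?case by (simp add: qcomp_assoc)
qed

definition whisker :: "obj \<Rightarrow> obj \<Rightarrow> 'k::comm_ring_1 slice list \<Rightarrow> 'k slice list" where
  "whisker P N L = map (\<lambda>(P', g, N'). (P @ P', g, N' @ N)) L"

lemma whisker_Nil_Nil [simp]: "whisker [] [] L = L"
  by (simp add: whisker_def case_prod_unfold)

lemma chain_cod_whisker:
  "chain_cod a L = Some b \<Longrightarrow> chain_cod (P @ a @ N) (whisker P N L) = Some (P @ b @ N)"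
  by (induction L arbitrary: b) (auto simp: whisker_def split: option.splits if_splits)

lemma chain_mor_whisker:
  "chain_cod a L \<noteq> None \<Longrightarrow> chain_mor (P @ a @ N) (whisker P N L) = qid P \<otimes> chain_mor a L \<otimes> qid N"
proof (induction L)
  case Nil then show ?case by (simp add: whisker_def qtens_id)
next
  case (Cons s L)
  obtain P' g N' where s: "s = (P', g, N')" by (cases s)
  from Cons.prems obtain b x y where L: "chain_cod a L = Some b" and g: "htype g = Some (x, y)"
     and b: "b = P' @ x @ N'"
    by (auto simp: s split: option.splits if_splits)
  have "chain_mor (P @ a @ N) (whisker P N (s # L))
      = slice_mor (P @ P', g, N' @ N) \<odot> (qid P \<otimes> chain_mor a L \<otimes> qid N)"
    using Cons L by (simp add: s whisker_def)
  also have "\<dots> = qid P \<otimes> (slice_mor s \<odot> chain_mor a L) \<otimes> qid N"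
    using L g b by (simp add: s hmor_simps htype_chain_mor)
  finally show ?case by simp
qed

lemma chain_mor_replace_segment:
  assumes eq: "chain_mor c M = chain_mor c M'" and typed: "chain_cod c M \<noteq> None"
    and below: "chain_cod a L2 = Some (P @ c @ N)"
  shows "chain_mor a (L1 @ whisker P N M @ L2) = chain_mor a (L1 @ whisker P N M' @ L2)"
proof -
  obtain d where d: "chain_cod c M = Some d" using typed by auto
  have d': "chain_cod c M' = Some d"
    using arg_cong[OF eq, of htype] d by (cases "chain_cod c M'") (auto simp: htype_chain_mor)
  have split: "chain_mor a (L1 @ whisker P N K @ L2)
      = chain_mor (P @ d @ N) L1 \<odot> (qid P \<otimes> chain_mor c K \<otimes> qid N) \<odot> chain_mor a L2"
    if "chain_cod c K = Some d" for K
    using that below chain_cod_whisker[OF that]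
    by (simp add: chain_mor_append chain_cod_append chain_mor_whisker)
  show ?thesis using split[OF d] split[OF d'] eq by simp
qed

lemma chain_mor_replace:
  assumes "chain_mor c M = chain_mor c M'" "chain_cod c M \<noteq> None"
    and segment: "take (length M) (drop i L) = whisker P N M"
    and "chain_cod a (drop (i + length M) L) = Some (P @ c @ N)"
  shows "chain_mor a L = chain_mor a (take i L @ whisker P N M' @ drop (i + length M) L)"
proof -
  have "L = take i L @ whisker P N M @ drop (i + length M) L"
    using segment by (metis append_take_drop_id add.commute drop_drop)
  then show ?thesis using chain_mor_replace_segment assms by metis
qed

lemma chain_mor_expand:
  assumes "L ! i = (P, chain_mor c M, N)" "chain_cod c M \<noteq> None" "i < length L"
    and "chain_cod a (drop (Suc i) L) = Some (P @ c @ N)"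
  shows "chain_mor a L = chain_mor a (take i L @ whisker P N M @ drop (Suc i) L)"
proof -
  let ?S = "[([], chain_mor c M, [])]"
  have "chain_mor c ?S = chain_mor c M" "chain_cod c ?S \<noteq> None"
    using assms(2) by (auto simp: hmor_simps htype_chain_mor)
  moreover have "take (length ?S) (drop i L) = whisker P N ?S"
    using assms(1,3) by (simp add: whisker_def take_Suc_conv_app_nth)
  ultimately show ?thesis using chain_mor_replace assms(4) by fastforce
qed

lemma append3_eq_append3D:
  assumes e: "P1 @ a1 @ N1 = P2 @ b2 @ N2" and l: "length P1 + length a1 \<le> length P2"
  shows "P2 = P1 @ a1 @ drop (length P1 + length a1) P2 \<and> N1 = drop (length P1 + length a1) P2 @ b2 @ N2"
proof -
  let ?k = "length P1 + length a1"
  have "take ?k P2 = P1 @ a1"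
    using arg_cong[OF e, of "take ?k"] l by simp
  then have P2: "P2 = P1 @ a1 @ drop ?k P2" by (metis append_assoc append_take_drop_id)
  then have "P1 @ a1 @ N1 = P1 @ a1 @ drop ?k P2 @ b2 @ N2" using e by (metis append_assoc)
  then show ?thesis using P2 by simp
qed

lemma slices_commute: "htype g = Some (a, b) \<Longrightarrow> htype h = Some (c, d) \<Longrightarrow>
  (qid P \<otimes> g \<otimes> qid (M @ d @ N)) \<odot> (qid (P @ a @ M) \<otimes> h \<otimes> qid N)
  = (qid (P @ b @ M) \<otimes> h \<otimes> qid N) \<odot> (qid P \<otimes> g \<otimes> qid (M @ c @ N))"
  by (simp only: qtens_id[symmetric] qtens_assoc)
    (simp add: qinterchange_dom_cod qcomp_id_left_cod qcomp_id_right_dom htyped_def hdom_def hcod_def)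

text \<open>Two consecutive slices whose generators sit side by side can be slid past each other;
  dir selects whether the upper generator lies to the right (True) or to the left of the lower one.\<close>

fun swap_slices :: "bool \<Rightarrow> 'k::comm_ring_1 slice \<Rightarrow> 'k slice \<Rightarrow> ('k slice \<times> 'k slice) option" where
  "swap_slices dir (P1, g1, N1) (P2, g2, N2) = (case (htype g1, htype g2) of
     (Some (a1, b1), Some (a2, b2)) \<Rightarrow>
       if dir then (if length P1 + length a1 \<le> length P2 then
         (let mid = drop (length P1 + length a1) P2 in Some ((P1 @ b1 @ mid, g2, N2), (P1, g1, mid @ a2 @ N2)))
         else None)
       else (if length P2 + length b2 \<le> length P1 then
         (let mid = drop (length P2 + length b2) P1 in Some ((P2, g2, mid @ b1 @ N1), (P2 @ a2 @ mid, g1, N1)))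
       else None)
   | _ \<Rightarrow> None)"

lemma swap_slices_correct:
  assumes sw: "swap_slices dir s1 s2 = Some (t1, t2)" and ty: "chain_cod b [s1, s2] \<noteq> None"
  shows "slice_mor s1 \<odot> slice_mor s2 = slice_mor t1 \<odot> slice_mor t2"
proof -
  obtain P1 g1 N1 where s1: "s1 = (P1, g1, N1)" by (cases s1)
  obtain P2 g2 N2 where s2: "s2 = (P2, g2, N2)" by (cases s2)
  obtain a1 b1 a2 b2 where g1: "htype g1 = Some (a1, b1)" and g2: "htype g2 = Some (a2, b2)"
    using sw by (auto simp: s1 s2 split: option.splits)
  have eq: "P1 @ a1 @ N1 = P2 @ b2 @ N2"
    using ty g1 g2 by (auto simp: s1 s2 split: option.splits if_splits)
  show ?thesis
  proof (cases dir)
    case True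
    then have le: "length P1 + length a1 \<le> length P2"
      using sw g1 g2 by (auto simp: s1 s2 split: if_splits)
    let ?m = "drop (length P1 + length a1) P2"
    have "t1 = (P1 @ b1 @ ?m, g2, N2)" "t2 = (P1, g1, ?m @ a2 @ N2)"
      using sw le True g1 g2 by (auto simp: s1 s2 Let_def)
    then show ?thesis
      using slices_commute[OF g1 g2, of P1 ?m N2] append3_eq_append3D[OF eq le] by (simp add: s1 s2)
  next
    case False
    then have le: "length P2 + length b2 \<le> length P1"
      using sw g1 g2 by (auto simp: s1 s2 split: if_splits)
    let ?m = "drop (length P2 + length b2) P1"
    have "t1 = (P2, g2, ?m @ b1 @ N1)" "t2 = (P2 @ a2 @ ?m, g1, N1)"
      using sw le False g1 g2 by (auto simp: s1 s2 Let_def split: if_splits)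
    then show ?thesis
      using slices_commute[OF g2 g1, of P2 ?m N1] append3_eq_append3D[OF eq[symmetric] le] by (simp add: s1 s2)
  qed
qed

definition swap_at :: "bool \<Rightarrow> nat \<Rightarrow> 'k::comm_ring_1 slice list \<Rightarrow> 'k slice list" where
  "swap_at dir i L = (case swap_slices dir (L ! i) (L ! Suc i) of
     Some (t1, t2) \<Rightarrow> take i L @ [t1, t2] @ drop (Suc (Suc i)) L | None \<Rightarrow> L)"

lemma chain_mor_swap_at:
  assumes len: "Suc i < length L" and typed: "chain_cod a L \<noteq> None"
  shows "chain_mor a L = chain_mor a (swap_at dir i L)"
proof (cases "swap_slices dir (L ! i) (L ! Suc i)")
  case None then show ?thesis by (simp add: swap_at_def)
next
  case (Some t)
  obtain t1 t2 where t: "t = (t1, t2)" by (cases t)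
  let ?M = "[L ! i, L ! Suc i]" and ?L2 = "drop (Suc (Suc i)) L"
  have L: "take i L @ ?M @ ?L2 = L"
    using len by (metis Cons_nth_drop_Suc Suc_lessD append_Cons append_Nil append_take_drop_id)
  have "chain_cod a (take i L @ ?M @ ?L2) \<noteq> None"
    by (subst L) (rule typed)
  then obtain b where b: "chain_cod a ?L2 = Some b" and M: "chain_cod b ?M \<noteq> None"
    by (auto simp only: chain_cod_append split: option.splits)
  have "chain_mor b ?M = chain_mor b [t1, t2]"
    using swap_slices_correct[OF _ M] Some t by (simp add: chain_mor.simps qcomp_assoc[symmetric])
  then have "chain_mor a (take i L @ whisker [] [] ?M @ ?L2)
      = chain_mor a (take i L @ whisker [] [] [t1, t2] @ ?L2)"
    using M b by (intro chain_mor_replace_segment) auto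
  then show ?thesis using L Some t by (simp add: swap_at_def)
qed

lemma chain_mor_add: "chain_mor a (L1 @ (P, F \<boxplus> G, N) # L2)
    = chain_mor a (L1 @ (P, F, N) # L2) \<boxplus> chain_mor a (L1 @ (P, G, N) # L2)"
  by (induction L1) (auto simp: qcomp_add_left qcomp_add_right qtens_add_left qtens_add_right)

lemma chain_mor_smul:
  "chain_mor a (L1 @ (P, qsmul r F, N) # L2) = qsmul r (chain_mor a (L1 @ (P, F, N) # L2))"
  by (induction L1) (auto simp: qcomp_smul_left qcomp_smul_right qtens_smul_left qtens_smul_right)

abbreviation "qX \<equiv> hclass Gx"
abbreviation "qS \<equiv> hclass Gs"
abbreviation "qC \<equiv> hclass Gc"
abbreviation "qD \<equiv> hclass Gd"

lemma up_zigzag: "chain_mor [True] [([], qD, [True]), ([True], qC, [])] = chain_mor [True] []"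
  by (simp add: hmor_simps qA_up)

lemma up_zigzag_cod: "chain_cod [True] [([], qD, [True]), ([True], qC, [])] \<noteq> None"
  by simp

lemma down_zigzag: "chain_mor [False] [([False], qD, []), ([], qC, [False])] = chain_mor [False] []"
  by (simp add: hmor_simps qA_down)

declare chain_mor.simps [simp del]
lemmas swap_at_unfold = swap_at_def Let_def

section \<open>Duality and mates\<close>

text \<open>is_dual A A' cu ca: the unit cu : 1 \<rightarrow> A'A and the counit ca : AA' \<rightarrow> 1 satisfy the zigzag
  identities, as c and d do for A = \<up> and A' = \<down>.\<close>

definition is_dual :: "obj \<Rightarrow> obj \<Rightarrow> 'k::comm_ring_1 hmor \<Rightarrow> 'k hmor \<Rightarrow> bool" where
  "is_dual A A' cu ca \<longleftrightarrow> htype cu = Some ([], A' @ A) \<and> htype ca = Some (A @ A', [])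
    \<and> chain_mor A [([], ca, A), (A, cu, [])] = chain_mor A []
    \<and> chain_mor A' [(A', ca, []), ([], cu, A')] = chain_mor A' []"

lemma is_dual_htype: "is_dual A A' cu ca \<Longrightarrow> htype cu = Some ([], A' @ A) \<and> htype ca = Some (A @ A', [])"
  by (simp add: is_dual_def)

lemma is_dual_zig: "is_dual A A' cu ca \<Longrightarrow> chain_mor A [([], ca, A), (A, cu, [])] = chain_mor A []"
  and is_dual_zig_cod: "is_dual A A' cu ca \<Longrightarrow> chain_cod A [([], ca, A), (A, cu, [])] \<noteq> None"
  and is_dual_zag: "is_dual A A' cu ca \<Longrightarrow> chain_mor A' [(A', ca, []), ([], cu, A')] = chain_mor A' []"
  and is_dual_zag_cod: "is_dual A A' cu ca \<Longrightarrow> chain_cod A' [(A', ca, []), ([], cu, A')] \<noteq> None"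
  by (simp_all add: is_dual_def)

definition coev_append :: "obj \<Rightarrow> obj \<Rightarrow> 'k::comm_ring_1 hmor \<Rightarrow> 'k hmor \<Rightarrow> 'k hmor" where
  "coev_append B B' cu cu' = chain_mor [] [(B', cu, B), ([], cu', [])]"

definition ev_append :: "obj \<Rightarrow> obj \<Rightarrow> obj \<Rightarrow> obj \<Rightarrow> 'k::comm_ring_1 hmor \<Rightarrow> 'k hmor \<Rightarrow> 'k hmor" where
  "ev_append A A' B B' ca ca' = chain_mor (A @ B @ B' @ A') [([], ca, []), (A, ca', A')]"

lemma is_dual_append:
  assumes dA: "is_dual A A' cu ca" and dB: "is_dual B B' cu' ca'"
  shows "is_dual (A @ B) (B' @ A') (coev_append B B' cu cu') (ev_append A A' B B' ca ca')"
proof -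
  note t = is_dual_htype[OF dA] is_dual_htype[OF dB]
  let ?cu = "coev_append B B' cu cu'" and ?ca = "ev_append A A' B B' ca ca'"
  \<comment> \<open>in both zigzags, the inner cup and cap are separated from the outer ones and cancel first\<close>
  have zig: "chain_mor (A @ B) [([], ?ca, A @ B), (A @ B, ?cu, [])] = chain_mor (A @ B) []"
    using t
    apply (subst chain_mor_expand[where i=1 and c="[]" and M="[(B', cu, B), ([], cu', [])]"],
        simp, simp add: coev_append_def, simp, simp, simp)
    apply (subst chain_mor_expand[where i=0 and c="A @ B @ B' @ A'" and M="[([], ca, []), (A, ca', A')]"],
        simp, simp add: ev_append_def, simp, simp, simp add: whisker_def)
    apply (simp add: whisker_def)
    apply (subst chain_mor_swap_at[where dir=True and i=1], simp, simp, simp add: swap_at_unfold)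
    apply (subst chain_mor_replace[OF is_dual_zig[OF dB] is_dual_zig_cod[OF dB], where i=2 and P="A" and N="[]"],
        simp add: whisker_def, simp, simp add: whisker_def)
    apply (subst chain_mor_replace[OF is_dual_zig[OF dA] is_dual_zig_cod[OF dA], where i=0 and P="[]" and N="B"],
        simp add: whisker_def, simp, simp add: whisker_def)
    done
  have zag: "chain_mor (B' @ A') [(B' @ A', ?ca, []), ([], ?cu, B' @ A')] = chain_mor (B' @ A') []"
    using t
    apply (subst chain_mor_expand[where i=1 and c="[]" and M="[(B', cu, B), ([], cu', [])]"],
        simp, simp add: coev_append_def, simp, simp, simp)
    apply (subst chain_mor_expand[where i=0 and c="A @ B @ B' @ A'" and M="[([], ca, []), (A, ca', A')]"],
        simp, simp add: ev_append_def, simp, simp, simp add: whisker_def)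
    apply (simp add: whisker_def)
    apply (subst chain_mor_swap_at[where dir=False and i=1], simp, simp, simp add: swap_at_unfold)
    apply (subst chain_mor_replace[OF is_dual_zag[OF dB] is_dual_zag_cod[OF dB], where i=2 and P="[]" and N="A'"],
        simp add: whisker_def, simp, simp add: whisker_def)
    apply (subst chain_mor_replace[OF is_dual_zag[OF dA] is_dual_zag_cod[OF dA], where i=0 and P="B'" and N="[]"],
        simp add: whisker_def, simp, simp add: whisker_def)
    done
  have "htype ?cu = Some ([], (B' @ A') @ (A @ B))" "htype ?ca = Some ((A @ B) @ (B' @ A'), [])"
    using t by (simp_all add: coev_append_def ev_append_def chain_mor.simps)
  with zig zag show ?thesis unfolding is_dual_def by simp
qed

text \<open>The mate of f : A \<rightarrow> B is the morphism B' \<rightarrow> A' obtained by bending both ends of f.\<close>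

definition mate :: "obj \<Rightarrow> obj \<Rightarrow> 'k::comm_ring_1 hmor \<Rightarrow> 'k hmor \<Rightarrow> 'k hmor \<Rightarrow> 'k hmor" where
  "mate A' B' cu ca' f = chain_mor B' [(A', ca', []), (A', f, B'), ([], cu, B')]"

lemma mate_comp:
  assumes dA: "is_dual A A' cu ca" and dB: "is_dual B B' cu' ca'" and dC: "is_dual C C' cu'' ca''"
    and f: "htype f = Some (A, B)" and g: "htype g = Some (B, C)"
  shows "mate A' C' cu ca'' (g \<odot> f) = mate A' B' cu ca' f \<odot> mate B' C' cu' ca'' g"
proof -
  note t = is_dual_htype[OF dA] is_dual_htype[OF dB] is_dual_htype[OF dC]
  let ?L = "[(A', ca', []), (A', f, B'), ([], cu, B')] @ [(B', ca'', []), (B', g, C'), ([], cu', C')]"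
  have "mate A' B' cu ca' f \<odot> mate B' C' cu' ca'' g = chain_mor C' ?L"
    unfolding mate_def using t g by (subst chain_mor_append[where b="B'"]) auto
  \<comment> \<open>move g and the outer cap up past f and the middle cup, until the cup of B meets its cap\<close>
  also have "chain_mor C' ?L = chain_mor C' [(A', ca'', []), (A', g, C'), (A', f, C'), ([], cu, C')]"
    using t f g
    apply simp
    apply (subst chain_mor_swap_at[where dir=True and i=2], simp, simp, simp add: swap_at_unfold)
    apply (subst chain_mor_swap_at[where dir=True and i=3], simp, simp, simp add: swap_at_unfold)
    apply (subst chain_mor_swap_at[where dir=True and i=4], simp, simp, simp add: swap_at_unfold)
    apply (subst chain_mor_swap_at[where dir=True and i=1], simp, simp, simp add: swap_at_unfold)
    apply (subst chain_mor_swap_at[where dir=True and i=2], simp, simp, simp add: swap_at_unfold)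
    apply (subst chain_mor_swap_at[where dir=True and i=3], simp, simp, simp add: swap_at_unfold)
    apply (subst chain_mor_swap_at[where dir=True and i=0], simp, simp, simp add: swap_at_unfold)
    apply (subst chain_mor_swap_at[where dir=True and i=1], simp, simp, simp add: swap_at_unfold)
    apply (subst chain_mor_replace[OF is_dual_zig[OF dB] is_dual_zig_cod[OF dB], where i=2 and P="A'" and N="C'"],
        simp add: whisker_def, simp, simp add: whisker_def)
    done
  also have "\<dots> = mate A' C' cu ca'' (g \<odot> f)"
    unfolding mate_def using t f g
    by (subst (2) chain_mor_expand[where i=1 and c="A" and M="[([], g, []), ([], f, [])]"])
      (simp_all add: chain_mor.simps hmor_simps whisker_def)
  finally show ?thesis by (rule sym)
qed

lemma mate_id:
  assumes dA: "is_dual A A' cu ca" shows "mate A' A' cu ca (qid A) = qid A'"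
proof -
  have "mate A' A' cu ca (qid A) = chain_mor A' [(A', ca, []), ([], cu, A')]"
    unfolding mate_def using is_dual_htype[OF dA]
    by (subst chain_mor_expand[where i=1 and c="A" and M="[]"]) (simp_all add: chain_mor.simps whisker_def)
  also have "\<dots> = qid A'"
    using is_dual_zag[OF dA] by (simp add: chain_mor.simps)
  finally show ?thesis .
qed

lemma mate_add: "mate A' B' cu ca (F \<boxplus> G) = mate A' B' cu ca F \<boxplus> mate A' B' cu ca G"
  unfolding mate_def using chain_mor_add[of B' "[(A', ca, [])]"] by simp

lemma mate_smul: "mate A' B' cu ca (qsmul r F) = qsmul r (mate A' B' cu ca F)"
  unfolding mate_def using chain_mor_smul[of B' "[(A', ca, [])]"] by simp

lemma mate_whisker_right:
  assumes dA: "is_dual A A' cuA caA" and dB: "is_dual B B' cuB caB" and dC: "is_dual C C' cuC caC"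
    and f: "htype f = Some (A, B)"
  shows "mate (C' @ A') (C' @ B') (coev_append C C' cuA cuC) (ev_append B B' C C' caB caC) (f \<otimes> qid C)
     = qid C' \<otimes> mate A' B' cuA caB f"
proof -
  note t = is_dual_htype[OF dA] is_dual_htype[OF dB] is_dual_htype[OF dC]
  let ?M = "[(A', caB, []), (A', f, B'), ([], cuA, B')]"
  have "mate (C' @ A') (C' @ B') (coev_append C C' cuA cuC) (ev_append B B' C C' caB caC) (f \<otimes> qid C)
    = chain_mor (C' @ B') [(C' @ A', caB, []), (C' @ A' @ B, caC, B'), (C' @ A', f, C @ C' @ B'),
        (C', cuA, C @ C' @ B'), ([], cuC, C' @ B')]"
    unfolding mate_def using t f
    apply (subst chain_mor_expand[where i=2 and c="[]" and M="[(C', cuA, C), ([], cuC, [])]"],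
        simp, simp add: coev_append_def, simp, simp, simp)
    apply (subst chain_mor_expand[where i=1 and c="A @ C" and M="[([], f, C)]"],
        simp, simp add: chain_mor.simps hmor_simps, simp, simp, simp add: whisker_def)
    apply (subst chain_mor_expand[where i=0 and c="B @ C @ C' @ B'" and M="[([], caB, []), (B, caC, B')]"],
        simp, simp add: ev_append_def, simp, simp, simp add: whisker_def)
    apply (simp add: whisker_def)
    done
  \<comment> \<open>the strands of C form a zigzag that straightens out\<close>
  also have "\<dots> = chain_mor (C' @ B') (whisker C' [] ?M)"
    using t f
    apply (subst chain_mor_swap_at[where dir=False and i=1], simp, simp, simp add: swap_at_unfold)
    apply (subst chain_mor_swap_at[where dir=False and i=2], simp, simp, simp add: swap_at_unfold)
    apply (subst chain_mor_replace[OF is_dual_zag[OF dC] is_dual_zag_cod[OF dC], where i=3 and P="[]" and N="B'"],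
        simp add: whisker_def, simp, simp add: whisker_def)
    done
  also have "\<dots> = qid C' \<otimes> mate A' B' cuA caB f"
    unfolding mate_def using t f chain_mor_whisker[of B' ?M C' "[]"] by (simp add: qtens_unit_right)
  finally show ?thesis .
qed

lemma mate_whisker_left:
  assumes dA: "is_dual A A' cuA caA" and dB: "is_dual B B' cuB caB" and dC: "is_dual C C' cuC caC"
    and f: "htype f = Some (A, B)"
  shows "mate (A' @ C') (B' @ C') (coev_append A A' cuC cuA) (ev_append C C' B B' caC caB) (qid C \<otimes> f)
     = mate A' B' cuA caB f \<otimes> qid C'"
proof -
  note t = is_dual_htype[OF dA] is_dual_htype[OF dB] is_dual_htype[OF dC]
  let ?M = "[(A', caB, []), (A', f, B'), ([], cuA, B')]"
  have "mate (A' @ C') (B' @ C') (coev_append A A' cuC cuA) (ev_append C C' B B' caC caB) (qid C \<otimes> f)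
    = chain_mor (B' @ C') [(A' @ C', caC, []), (A' @ C' @ C, caB, C'), (A' @ C' @ C, f, B' @ C'),
        (A', cuC, A @ B' @ C'), ([], cuA, B' @ C')]"
    unfolding mate_def using t f
    apply (subst chain_mor_expand[where i=2 and c="[]" and M="[(A', cuC, A), ([], cuA, [])]"],
        simp, simp add: coev_append_def, simp, simp, simp)
    apply (subst chain_mor_expand[where i=1 and c="C @ A" and M="[(C, f, [])]"],
        simp, simp add: chain_mor.simps hmor_simps, simp, simp, simp add: whisker_def)
    apply (subst chain_mor_expand[where i=0 and c="C @ B @ B' @ C'" and M="[([], caC, []), (C, caB, C')]"],
        simp, simp add: ev_append_def, simp, simp, simp add: whisker_def)
    apply (simp add: whisker_def)
    done
  also have "\<dots> = chain_mor (B' @ C') (whisker [] C' ?M)"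
    using t f
    apply (subst chain_mor_swap_at[where dir=False and i=2], simp, simp, simp add: swap_at_unfold)
    apply (subst chain_mor_swap_at[where dir=False and i=1], simp, simp, simp add: swap_at_unfold)
    apply (subst chain_mor_replace[OF is_dual_zag[OF dC] is_dual_zag_cod[OF dC], where i=0 and P="A'" and N="[]"],
        simp add: whisker_def, simp, simp add: whisker_def)
    done
  also have "\<dots> = mate A' B' cuA caB f \<otimes> qid C'"
    unfolding mate_def using t f chain_mor_whisker[of B' ?M "[]" C'] by (simp add: qtens_unit_left)
  finally show ?thesis .
qed

section \<open>The relations (H) for x' and s'\<close>

lemma dual_up: "is_dual [True] [False] qC qD"
  unfolding is_dual_def using up_zigzag down_zigzag by simp

abbreviation "coev2 \<equiv> coev_append [True] [False] qC qC"
abbreviation "ev2 \<equiv> ev_append [True] [False] [True] [False] qD qD"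
abbreviation "coev3 \<equiv> coev_append [True] [False] coev2 qC"
abbreviation "ev3 \<equiv> ev_append [True, True] [False, False] [True] [False] ev2 qD"

lemma dual_up2: "is_dual [True, True] [False, False] coev2 ev2"
  using is_dual_append[OF dual_up dual_up] by simp

lemma dual_up3: "is_dual [True, True, True] [False, False, False] coev3 ev3"
  using is_dual_append[OF dual_up2 dual_up] by simp

lemma coev3_assoc: "coev_append [True, True] [False, False] qC coev2 = coev3"
  by (simp add: coev_append_def chain_mor.simps hmor_simps)

lemma ev3_assoc: "ev_append [True] [False] [True, True] [False, False] qD ev2 = ev3"
  by (simp add: ev_append_def chain_mor.simps hmor_simps)

abbreviation "mate1 \<equiv> mate [False] [False] qC qD"
abbreviation "mate2 \<equiv> mate [False, False] [False, False] coev2 ev2"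
abbreviation "mate3 \<equiv> mate [False, False, False] [False, False, False] coev3 ev3"
abbreviation "qx' \<equiv> hclass xprime"
abbreviation "qs' \<equiv> hclass sprime"

lemma mate1_x: "mate1 qX = qx'"
  by (simp add: mate_def chain_mor.simps hmor_simps xprime_def)

lemma mate2_s: "mate2 qS = qs'"
  by (simp add: mate_def chain_mor.simps hmor_simps sprime_def tmor_def coev_append_def ev_append_def)

lemma mate2_x_tens_id: "mate2 (qX \<otimes> qid [True]) = qid [False] \<otimes> qx'"
  using mate_whisker_right[OF dual_up dual_up dual_up, of qX] by (simp add: mate1_x)

lemma mate2_id_tens_x: "mate2 (qid [True] \<otimes> qX) = qx' \<otimes> qid [False]"
  using mate_whisker_left[OF dual_up dual_up dual_up, of qX] by (simp add: mate1_x)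

lemma mate3_s_tens_id: "mate3 (qS \<otimes> qid [True]) = qid [False] \<otimes> qs'"
  using mate_whisker_right[OF dual_up2 dual_up2 dual_up, of qS] by (simp add: mate2_s)

lemma mate3_id_tens_s: "mate3 (qid [True] \<otimes> qS) = qs' \<otimes> qid [False]"
  using mate_whisker_left[OF dual_up2 dual_up2 dual_up, of qS] by (simp add: mate2_s coev3_assoc ev3_assoc)

lemma sprime_sprime: "qs' \<odot> qs' = qid [False, False]"
proof -
  have "qs' \<odot> qs' = mate2 (qS \<odot> qS)"
    unfolding mate2_s[symmetric] by (rule mate_comp[OF dual_up2 dual_up2 dual_up2, symmetric]) auto
  also have "\<dots> = qid [False, False]"
    using mate_id[OF dual_up2] by (simp add: qH_ss)
  finally show ?thesis .
qed

lemma mate3_comp3: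
  assumes "htype f = Some ([True, True, True], [True, True, True])"
    "htype g = Some ([True, True, True], [True, True, True])"
    "htype h = Some ([True, True, True], [True, True, True])"
  shows "mate3 (f \<odot> g \<odot> h) = mate3 h \<odot> mate3 g \<odot> mate3 f"
proof -
  have "mate3 (f \<odot> (g \<odot> h)) = mate3 (g \<odot> h) \<odot> mate3 f"
    by (rule mate_comp[OF dual_up3 dual_up3 dual_up3]) (use assms in simp_all)
  also have "mate3 (g \<odot> h) = mate3 h \<odot> mate3 g"
    by (rule mate_comp[OF dual_up3 dual_up3 dual_up3]) (use assms in simp_all)
  finally show ?thesis by (simp add: qcomp_assoc)
qed

lemma sprime_braid:
  "(qs' \<otimes> qid [False]) \<odot> (qid [False] \<otimes> qs') \<odot> (qs' \<otimes> qid [False])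
   = ((qid [False] \<otimes> qs') \<odot> (qs' \<otimes> qid [False]) \<odot> (qid [False] \<otimes> qs') :: 'k::comm_ring_1 hmor)"
proof -
  let ?a = "qS \<otimes> qid [True] :: 'k hmor" and ?b = "qid [True] \<otimes> qS :: 'k hmor"
  have "(qid [False] \<otimes> qs') \<odot> (qs' \<otimes> qid [False]) \<odot> (qid [False] \<otimes> qs') = mate3 (?a \<odot> ?b \<odot> ?a)"
    using mate3_comp3[of ?a ?b ?a] by (simp add: mate3_s_tens_id mate3_id_tens_s)
  also have "\<dots> = mate3 (?b \<odot> ?a \<odot> ?b)"
    by (simp only: qH_braid)
  also have "\<dots> = (qs' \<otimes> qid [False]) \<odot> (qid [False] \<otimes> qs') \<odot> (qs' \<otimes> qid [False])"
    using mate3_comp3[of ?b ?a ?b] by (simp add: mate3_s_tens_id mate3_id_tens_s)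
  finally show ?thesis by (rule sym)
qed

lemma sprime_dot:
  "(qs' \<odot> (qid [False] \<otimes> qx')) \<boxplus> qsmul (-1) ((qx' \<otimes> qid [False]) \<odot> qs')
   = (qid [False, False] :: 'k::comm_ring_1 hmor)"
proof -
  have "mate2 ((qX \<otimes> qid [True]) \<odot> qS) = (qs' \<odot> (qid [False] \<otimes> qx') :: 'k hmor)"
    using mate_comp[OF dual_up2 dual_up2 dual_up2, of qS "qX \<otimes> qid [True]"]
    by (simp add: mate2_s mate2_x_tens_id)
  moreover have "mate2 (qS \<odot> (qid [True] \<otimes> qX)) = ((qx' \<otimes> qid [False]) \<odot> qs' :: 'k hmor)"
    using mate_comp[OF dual_up2 dual_up2 dual_up2, of "qid [True] \<otimes> qX" qS]
    by (simp add: mate2_s mate2_id_tens_x)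
  moreover have "mate2 ((qX \<otimes> qid [True]) \<odot> qS) \<boxplus> qsmul (-1) (mate2 (qS \<odot> (qid [True] \<otimes> qX)))
      = (qid [False, False] :: 'k hmor)"
    using arg_cong[OF qH_dot, of mate2] by (simp only: mate_add mate_smul mate_id[OF dual_up2])
  ultimately show ?thesis by simp
qed

text \<open>For f : \<up>X \<rightarrow> Y\<up>, rotate_term X Y f : X\<down> \<rightarrow> \<down>Y bends the left input strand of f up
  and its right output strand down; x' = rotate x, t = rotate s and s' = rotate t.
  The rotation is undone by bending the two strands back with d and c.\<close>

definition rotate_term :: "obj \<Rightarrow> obj \<Rightarrow> 'k mor \<Rightarrow> 'k mor" where
  "rotate_term X Y f = Comp (Tens (Id (False # Y)) Gd)
     (Comp (Tens (Id [False]) (Tens f (Id [False]))) (Tens Gc (Id (X @ [False]))))"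

definition unrotate :: "obj \<Rightarrow> obj \<Rightarrow> 'k::comm_ring_1 hmor \<Rightarrow> 'k hmor" where
  "unrotate X Y F = chain_mor (True # X) [([], qD, Y @ [True]), ([True], F, [True]), (True # X, qC, [])]"

lemma rotate_term_instances:
  "xprime = rotate_term [] [] Gx" "tmor = rotate_term [True] [True] Gs"
  "sprime = rotate_term [False] [False] tmor"
  by (simp_all add: rotate_term_def xprime_def tmor_def sprime_def)

lemma unrotate_smul: "unrotate X Y (qsmul r F) = qsmul r (unrotate X Y F)"
  using chain_mor_smul[of "True # X" "[([], qD, Y @ [True])]"] by (simp add: unrotate_def)

lemma unrotate_rotate_term:
  assumes f: "mtype 0 f = Some (True # X, Y @ [True])"
  shows "unrotate X Y (hclass (rotate_term X Y f)) = hclass f"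
proof -
  have "unrotate X Y (hclass (rotate_term X Y f))
    = chain_mor (True # X) [([], qD, Y @ [True]), (True # False # Y, qD, [True]),
        ([True, False], hclass f, [False, True]), ([True], qC, X @ [False, True]), (True # X, qC, [])]"
    unfolding unrotate_def using f
    by (subst chain_mor_expand[where i=1 and P="[True]" and N="[True]" and c="X @ [False]"
          and M="[(False # Y, qD, []), ([False], hclass f, [False]), ([], qC, X @ [False])]"])
      (simp_all add: rotate_term_def chain_mor.simps hmor_simps whisker_def)
  \<comment> \<open>slide f below the upper cap and above the lower cup, then straighten both zigzags\<close>
  also have "\<dots> = chain_mor (True # X) [([], hclass f, [])]"
    using f
    apply (subst chain_mor_swap_at[where dir=True and i=0], simp, simp, simp add: swap_at_unfold)
    apply (subst chain_mor_swap_at[where dir=True and i=1], simp, simp, simp add: swap_at_unfold)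
    apply (subst chain_mor_replace[OF up_zigzag up_zigzag_cod, where i=2 and P="[]" and N="X @ [False, True]"],
        simp add: whisker_def, simp, simp add: whisker_def)
    apply (subst chain_mor_swap_at[where dir=True and i=1], simp, simp, simp add: swap_at_unfold)
    apply (subst chain_mor_replace[OF up_zigzag up_zigzag_cod, where i=0 and P="Y" and N="[]"],
        simp add: whisker_def, simp, simp add: whisker_def)
    done
  also have "\<dots> = hclass f"
    using f by (simp add: chain_mor.simps hmor_simps)
  finally show ?thesis .
qed

text \<open>On the generators adjoined for (I), \<omega> is forced by \<omega> t = -t and
  \<omega> (d (x^r \<otimes> 1)) = (1 \<otimes> x^r) c: it sends Gu to -Gu and fixes each Gv r.\<close>

fun omega :: "'k::comm_ring_1 mor \<Rightarrow> 'k mor" where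
  "omega (Id a) = Id (swap_obj a)"
| "omega Gx = xprime"
| "omega Gs = Smul (-1) sprime"
| "omega Gc = Gd"
| "omega Gd = Gc"
| "omega Gu = Smul (-1) Gu"
| "omega (Gv r) = Gv r"
| "omega (Comp f g) = Comp (omega g) (omega f)"
| "omega (Tens f g) = Tens (omega f) (omega g)"
| "omega (Zer a b) = Zer (swap_obj b) (swap_obj a)"
| "omega (Add f g) = Add (omega f) (omega g)"
| "omega (Smul r f) = Smul r (omega f)"

lemma swap_obj_simps [simp]:
  "swap_obj [] = []" "swap_obj (x # xs) = (\<not> x) # swap_obj xs"
  "swap_obj (a @ b) = swap_obj a @ swap_obj b" "swap_obj (swap_obj a) = a"
  by (simp_all add: swap_obj_def map_idI)

lemma mtype_omega: "mtype m f = Some (a, b) \<Longrightarrow> mtype (- m) (omega f) = Some (swap_obj b, swap_obj a)"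
proof (induction f arbitrary: a b)
  case (Gv r) then show ?case by (auto split: if_splits)
next
  case (Comp f g) then show ?case by (auto simp: type_comp_eq_Some)
next
  case (Tens f g) then show ?case by (auto simp: type_tens_eq_Some)
next
  case (Add f g) then show ?case by (auto simp: type_add_eq_Some)
qed auto

lemma hty_omega: "hty m f a b \<Longrightarrow> hty (- m) (omega f) (swap_obj b) (swap_obj a)"
  by (simp add: hty_iff_mtype mtype_omega)

lemma mtype_omega_defined [simp]:
  "mtype m (omega (xpow n)) = Some ([False], [False])"
  "mtype m (omega tmor) = Some ([True, False], [False, True])"
  "mtype m (omega (dx r)) = Some ([], [False, True])"
  "mtype m (omega (cx r)) = Some ([True, False], [])"
  using mtype_omega[of "- m" "xpow n"] mtype_omega[of "- m" tmor] mtype_omega[of "- m" "dx r"]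
    mtype_omega[of "- m" "cx r"]
  by simp_all

lemma hclass_omega_rotate_term:
  "mtype 0 (omega f) = Some (swap_obj Y @ [False], False # swap_obj X) \<Longrightarrow>
   hclass (omega (rotate_term X Y f)) = unrotate (swap_obj Y) (swap_obj X) (hclass (omega f))"
  by (simp add: rotate_term_def unrotate_def chain_mor.simps hmor_simps)

lemma omega_xprime: "hclass (omega xprime) = qX"
proof -
  have "hclass (omega xprime) = unrotate [] [] qx'"
    using hclass_omega_rotate_term[of Gx "[]" "[]"] by (simp add: rotate_term_instances[symmetric])
  also have "\<dots> = qX"
    using unrotate_rotate_term[of Gx "[]" "[]"] by (simp add: rotate_term_instances[symmetric])
  finally show ?thesis .
qed

lemma omega_tmor: "hclass (omega tmor) = qsmul (-1) (hclass tmor)"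
proof -
  have "hclass (omega tmor) = qsmul (-1) (unrotate [False] [False] qs')"
    using hclass_omega_rotate_term[of Gs "[True]" "[True]"]
    by (simp add: rotate_term_instances[symmetric] unrotate_smul)
  also have "unrotate [False] [False] qs' = hclass tmor"
    using unrotate_rotate_term[of tmor "[False]" "[False]"] by (simp add: rotate_term_instances[symmetric])
  finally show ?thesis .
qed

lemma omega_sprime: "hclass (omega sprime) = qsmul (-1) qS"
proof -
  have "hclass (omega sprime) = qsmul (-1) (unrotate [True] [True] (hclass tmor))"
    using hclass_omega_rotate_term[of tmor "[False]" "[False]"]
    by (simp add: rotate_term_instances[symmetric] omega_tmor unrotate_smul)
  also have "unrotate [True] [True] (hclass tmor) = qS"
    using unrotate_rotate_term[of Gs "[True]" "[True]"] by (simp add: rotate_term_instances[symmetric])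
  finally show ?thesis .
qed

lemma omega_omega: "hclass (omega (omega f)) = hclass f"
  by (induction f) (simp_all add: omega_xprime omega_sprime qsmul_smul qsmul_one)

lemma omega_omega_heq:
  assumes "hty m f a b" shows "heq m (omega (omega f)) f"
proof (rule heq_if_hclass_eq[OF omega_omega])
  show "mtype m (omega (omega f)) \<noteq> None"
    using mtype_omega[OF mtype_omega[of m f a b]] assms by (simp add: hty_iff_mtype)
qed

lemma xprime_chain: "qx' = chain_mor [False] [([False], qD, []), ([False], qX, [False]), ([], qC, [False])]"
  by (simp add: xprime_def chain_mor.simps hmor_simps)

lemma xprime_slide_cup: "(qx' \<otimes> qid [True]) \<odot> qC = (qid [False] \<otimes> qX) \<odot> qC"
proof -
  have "(qx' \<otimes> qid [True]) \<odot> qC = chain_mor [] [([], qx', [True]), ([], qC, [])]"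
    by (simp add: chain_mor.simps hmor_simps)
  also have "\<dots> = chain_mor []
      [([False], qD, [True]), ([False], qX, [False, True]), ([], qC, [False, True]), ([], qC, [])]"
    by (subst chain_mor_expand[where i=0 and P="[]" and N="[True]"
          and c="[False]" and M="[([False], qD, []), ([False], qX, [False]), ([], qC, [False])]"])
      (simp_all add: xprime_chain whisker_def)
  also have "\<dots> = chain_mor [] [([False], qX, []), ([], qC, [])]"
    apply (subst chain_mor_swap_at[where dir=True and i=2], simp, simp, simp add: swap_at_unfold)
    apply (subst chain_mor_swap_at[where dir=True and i=1], simp, simp, simp add: swap_at_unfold)
    apply (subst chain_mor_replace[OF up_zigzag up_zigzag_cod, where i=0 and P="[False]" and N="[]"],
        simp add: whisker_def, simp, simp add: whisker_def)
    done
  also have "\<dots> = (qid [False] \<otimes> qX) \<odot> qC"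
    by (simp add: chain_mor.simps hmor_simps)
  finally show ?thesis .
qed

lemma xprime_slide_cap: "qD \<odot> (qid [True] \<otimes> qx') = qD \<odot> (qX \<otimes> qid [False])"
proof -
  have "qD \<odot> (qid [True] \<otimes> qx') = chain_mor [True, False] [([], qD, []), ([True], qx', [])]"
    by (simp add: chain_mor.simps hmor_simps)
  also have "\<dots> = chain_mor [True, False]
      [([], qD, []), ([True, False], qD, []), ([True, False], qX, [False]), ([True], qC, [False])]"
    by (subst chain_mor_expand[where i=1 and P="[True]" and N="[]"
          and c="[False]" and M="[([False], qD, []), ([False], qX, [False]), ([], qC, [False])]"])
      (simp_all add: xprime_chain whisker_def)
  also have "\<dots> = chain_mor [True, False] [([], qD, []), ([], qX, [False])]"
    apply (subst chain_mor_swap_at[where dir=True and i=0], simp, simp, simp add: swap_at_unfold)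
    apply (subst chain_mor_swap_at[where dir=True and i=1], simp, simp, simp add: swap_at_unfold)
    apply (subst chain_mor_replace[OF up_zigzag up_zigzag_cod, where i=2 and P="[]" and N="[False]"],
        simp add: whisker_def, simp, simp add: whisker_def)
    done
  also have "\<dots> = qD \<odot> (qX \<otimes> qid [False])"
    by (simp add: chain_mor.simps hmor_simps)
  finally show ?thesis .
qed

lemma qcomp_tens_commute: "htype A = Some (a, a') \<Longrightarrow> htype B = Some (b, b') \<Longrightarrow>
  (A \<otimes> qid b') \<odot> (qid a \<otimes> B) = (qid a' \<otimes> B) \<odot> (A \<otimes> qid b)"
  by (simp add: qinterchange_dom_cod qcomp_id_left_cod qcomp_id_right_dom htyped_def hdom_def hcod_def)

lemma omega_xpow_slide_cup:
  "((hclass (omega (xpow n)) :: 'k::comm_ring_1 hmor) \<otimes> qid [True]) \<odot> qC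
   = (qid [False] \<otimes> hclass (xpow n)) \<odot> qC"
proof (induction n)
  case 0 then show ?case by simp
next
  case (Suc n)
  let ?A = "hclass (omega (xpow n)) :: 'k hmor"
  have "(hclass (omega (xpow (Suc n))) \<otimes> qid [True]) \<odot> qC = (?A \<otimes> qid [True]) \<odot> ((qx' \<otimes> qid [True]) \<odot> qC)"
    by (simp add: hmor_simps)
  also have "\<dots> = ((?A \<otimes> qid [True]) \<odot> (qid [False] \<otimes> qX)) \<odot> qC"
    by (simp add: xprime_slide_cup qcomp_assoc)
  also have "\<dots> = ((qid [False] \<otimes> qX) \<odot> (?A \<otimes> qid [True])) \<odot> qC"
    by (rule arg_cong[OF qcomp_tens_commute, where f="\<lambda>z. z \<odot> qC"]) simp_all
  also have "\<dots> = (qid [False] \<otimes> hclass (xpow (Suc n))) \<odot> qC"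
    by (simp add: Suc qcomp_assoc) (simp add: hmor_simps)
  finally show ?case .
qed

lemma omega_xpow_slide_cap:
  "qD \<odot> (qid [True] \<otimes> (hclass (omega (xpow n)) :: 'k::comm_ring_1 hmor))
   = qD \<odot> (hclass (xpow n) \<otimes> qid [False])"
proof (induction n)
  case 0 then show ?case by (simp add: qtens_id)
next
  case (Suc n)
  let ?A = "hclass (omega (xpow n)) :: 'k hmor" and ?P = "hclass (xpow n) :: 'k hmor"
  have "qD \<odot> (qid [True] \<otimes> hclass (omega (xpow (Suc n)))) = (qD \<odot> (qid [True] \<otimes> ?A)) \<odot> (qid [True] \<otimes> qx')"
    by (simp add: hmor_simps)
  also have "\<dots> = qD \<odot> ((?P \<otimes> qid [False]) \<odot> (qid [True] \<otimes> qx'))"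
    by (simp add: Suc.IH qcomp_assoc)
  also have "\<dots> = qD \<odot> ((qid [True] \<otimes> qx') \<odot> (?P \<otimes> qid [False]))"
    by (rule arg_cong[OF qcomp_tens_commute, where f="\<lambda>z. qD \<odot> z"]) simp_all
  also have "\<dots> = qD \<odot> (hclass (xpow (Suc n)) \<otimes> qid [False])"
    by (simp add: xprime_slide_cap qcomp_assoc[symmetric]) (simp add: hmor_simps)
  finally show ?case .
qed

lemma omega_dx: "hclass (omega (dx r)) = hclass (cx r)"
  using omega_xpow_slide_cup by (simp add: dx_def cx_def)

lemma omega_cx: "hclass (omega (cx r)) = hclass (dx r)"
  using omega_xpow_slide_cap by (simp add: dx_def cx_def)

section \<open>\<omega> respects the defining relations\<close>

declare heq.eq_trans [trans]

lemma heq_neg_zero_if_hclass_eq: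
  assumes "hclass f = qsmul (-1) (hclass g)" "mtype m f \<noteq> None" "heq m g (Zer a b)"
  shows "heq m f (Zer a b)"
proof -
  have "heq m f (Smul (-1) g)"
    using assms(1,2) by (intro heq_if_hclass_eq) simp_all
  also have "heq m (Smul (-1) g) (Smul (-1) (Zer a b))"
    using assms(3) by (rule heq.cong_smul)
  also have "heq m (Smul (-1) (Zer a b)) (Zer a b)"
    by (rule heq_if_hclass_eq) (simp_all add: qsmul_neg_zero)
  finally show ?thesis .
qed

lemma heq_msum_cong:
  "(\<And>x. x \<in> set xs \<Longrightarrow> heq m (f x) (g x)) \<Longrightarrow> (\<And>x. x \<in> set xs \<Longrightarrow> mtype m (f x) = Some (a, b))
   \<Longrightarrow> heq m (msum a b (map f xs)) (msum a b (map g xs))"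
proof (induction xs)
  case Nil then show ?case by (simp add: msum_def heq_refl_mtype)
next
  case (Cons x xs)
  have "mtype m (msum a b (map f xs)) = Some (a, b)"
    using Cons.prems by (intro mtype_msum) auto
  then show ?case using Cons by (auto simp: msum_def hty_iff_mtype intro!: heq.cong_add)
qed

lemma omega_msum: "omega (msum a b fs) = msum (swap_obj b) (swap_obj a) (map omega fs)"
  by (induction fs) (simp_all add: msum_def)

lemma sprime_dot_swapped:
  "qsmul (-1) (qs' \<odot> (qx' \<otimes> qid [False])) \<boxplus> ((qid [False] \<otimes> qx') \<odot> qs') = qid [False, False]"
proof -
  \<comment> \<open>conjugate the dot relation for s' by s', which is an involution\<close>
  have s's': "qs' \<odot> (qs' \<odot> Z) = Z"
    if "htype Z = Some (a, [False, False])" for Z :: "'k::comm_ring_1 hmor" and a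
    using that by (simp add: qcomp_assoc[symmetric] sprime_sprime qcomp_id_left_cod htyped_def hcod_def)
  have "qs' \<odot> (((qs' \<odot> (qid [False] \<otimes> qx')) \<boxplus> qsmul (-1) ((qx' \<otimes> qid [False]) \<odot> qs')) \<odot> qs')
      = qs' \<odot> (qid [False, False] \<odot> qs')"
    by (simp only: sprime_dot)
  then have "((qid [False] \<otimes> qx') \<odot> qs') \<boxplus> qsmul (-1) (qs' \<odot> (qx' \<otimes> qid [False])) = qid [False, False]"
    by (simp add: qcomp_add_left qcomp_add_right qcomp_smul_left qcomp_smul_right qcomp_assoc s's'
        sprime_sprime qcomp_id_left_cod qcomp_id_right_dom htyped_def hcod_def hdom_def)
  then show ?thesis by (simp add: qadd_commute)
qed

lemma omega_H_ss: "heq (- m) (omega (Comp Gs Gs)) (omega (Id [True, True]))"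
  by (rule heq_if_hclass_eq) (simp_all add: hmor_simps sprime_sprime)

lemma omega_H_braid:
  "heq (- m) (omega (Comp (Tens Gs (Id [True])) (Comp (Tens (Id [True]) Gs) (Tens Gs (Id [True])))))
     (omega (Comp (Tens (Id [True]) Gs) (Comp (Tens Gs (Id [True])) (Tens (Id [True]) Gs))))"
proof (rule heq_if_hclass_eq)
  have "hclass (omega (Comp (Tens Gs (Id [True])) (Comp (Tens (Id [True]) Gs) (Tens Gs (Id [True])))))
      = qsmul (-1) ((qs' \<otimes> qid [False]) \<odot> (qid [False] \<otimes> qs') \<odot> (qs' \<otimes> qid [False]))"
    by (simp add: hmor_simps)
  also have "\<dots> = qsmul (-1) ((qid [False] \<otimes> qs') \<odot> (qs' \<otimes> qid [False]) \<odot> (qid [False] \<otimes> qs'))"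
    by (simp only: sprime_braid)
  also have "\<dots> = hclass (omega (Comp (Tens (Id [True]) Gs) (Comp (Tens Gs (Id [True])) (Tens (Id [True]) Gs))))"
    by (simp add: hmor_simps)
  finally show "hclass (omega (Comp (Tens Gs (Id [True])) (Comp (Tens (Id [True]) Gs) (Tens Gs (Id [True])))))
      = hclass (omega (Comp (Tens (Id [True]) Gs) (Comp (Tens Gs (Id [True])) (Tens (Id [True]) Gs))))" .
qed simp

lemma omega_H_dot:
  "heq (- m) (omega (Add (Comp (Tens Gx (Id [True])) Gs) (Smul (-1) (Comp Gs (Tens (Id [True]) Gx)))))
     (omega (Id [True, True]))"
proof (rule heq_if_hclass_eq)
  have "hclass (omega (Add (Comp (Tens Gx (Id [True])) Gs) (Smul (-1) (Comp Gs (Tens (Id [True]) Gx)))))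
      = qsmul (-1) (qs' \<odot> (qx' \<otimes> qid [False])) \<boxplus> ((qid [False] \<otimes> qx') \<odot> qs')"
    by (simp add: hmor_simps)
  then show "hclass (omega (Add (Comp (Tens Gx (Id [True])) Gs) (Smul (-1) (Comp Gs (Tens (Id [True]) Gx)))))
      = hclass (omega (Id [True, True]))"
    by (simp add: sprime_dot_swapped)
qed simp

text \<open>The inversion relations of Heis_m become those of Heis_(-m), with the roles of the
  two sides exchanged: \<omega> maps t to -t, Gu to -Gu, d (x^r \<otimes> 1) to (1 \<otimes> x^r) c and back.
  For m = 0 there are no Gv r and (I) just says that t and Gu are mutually inverse.\<close>

lemma omega_I_pos1:
  assumes "0 \<le> m"
  shows "heq (- m) (omega (Add (Comp Gu tmor)
             (msum [True, False] [True, False] (map (\<lambda>r. Comp (Gv r) (dx r)) [0..<nat m]))))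
           (omega (Id [True, False]))"
proof (cases "m = 0")
  case True
  have "heq 0 (Add (Comp (omega tmor) (Smul (-1) Gu)) (Zer [False, True] [False, True])) (Comp tmor Gu)"
    by (rule heq_if_hclass_eq) (simp_all add: omega_tmor hmor_simps qadd_zero)
  also have "heq 0 (Comp tmor Gu) (Id [False, True])"
    by (rule heq.I_pos2) simp
  finally show ?thesis using True by (simp add: msum_def)
next
  case False
  with assms have neg: "- m < 0" by simp
  let ?sum = "\<lambda>h. msum [False, True] [False, True] (map (\<lambda>r. Comp (h r) (Gv r)) [0..<nat m])"
  have "heq (- m) (Add (Comp (omega tmor) (Smul (-1) Gu)) (?sum (\<lambda>r. omega (dx r))))
      (Add (Comp tmor Gu) (?sum cx))"
  proof (rule heq.cong_add)
    show "heq (- m) (Comp (omega tmor) (Smul (-1) Gu)) (Comp tmor Gu)"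
      by (rule heq_if_hclass_eq) (simp_all add: omega_tmor hmor_simps)
    show "heq (- m) (?sum (\<lambda>r. omega (dx r))) (?sum cx)"
      using neg by (intro heq_msum_cong heq_if_hclass_eq) (simp_all add: omega_dx)
    show "hty (- m) (?sum (\<lambda>r. omega (dx r))) [False, True] [False, True]"
      unfolding hty_iff_mtype using neg by (intro mtype_msum) auto
  qed (simp add: hty_iff_mtype)
  also have "heq (- m) (Add (Comp tmor Gu) (?sum cx)) (Id [False, True])"
    using heq.I_neg1[OF neg] by simp
  finally show ?thesis by (simp add: omega_msum comp_def)
qed

lemma omega_I_pos2:
  assumes "0 \<le> m" shows "heq (- m) (omega (Comp tmor Gu)) (omega (Id [False, True]))"
proof (cases "m = 0")
  case True
  have "heq 0 (Comp (Smul (-1) Gu) (omega tmor))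
      (Add (Comp Gu tmor) (msum [True, False] [True, False] (map (\<lambda>r. Comp (Gv r) (dx r)) [0..<nat 0])))"
    by (rule heq_if_hclass_eq) (simp_all add: msum_def omega_tmor hmor_simps qadd_zero)
  also have "heq 0 \<dots> (Id [True, False])"
    by (rule heq.I_pos1) simp
  finally show ?thesis using True by simp
next
  case False
  with assms have neg: "- m < 0" by simp
  have "heq (- m) (Comp (Smul (-1) Gu) (omega tmor)) (Comp Gu tmor)"
    by (rule heq_if_hclass_eq) (simp_all add: omega_tmor hmor_simps)
  also have "heq (- m) (Comp Gu tmor) (Id [True, False])"
    by (rule heq.I_neg2[OF neg])
  finally show ?thesis by simp
qed

lemma omega_I_pos3:
  assumes "0 \<le> m" "int r < m" shows "heq (- m) (omega (Comp tmor (Gv r))) (omega (Zer [] [False, True]))"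
proof -
  have "heq (- m) (Comp (Gv r) (omega tmor)) (Zer [True, False] [])"
  proof (rule heq_neg_zero_if_hclass_eq)
    show "heq (- m) (Comp (Gv r) tmor) (Zer [True, False] [])"
      using assms by (intro heq.I_neg4) simp_all
  qed (use assms in \<open>simp_all add: omega_tmor hmor_simps\<close>)
  then show ?thesis by simp
qed

lemma omega_I_pos4:
  assumes "0 \<le> m" "int r < m" shows "heq (- m) (omega (Comp (dx r) Gu)) (omega (Zer [False, True] []))"
proof -
  have "heq (- m) (Comp (Smul (-1) Gu) (omega (dx r))) (Zer [] [True, False])"
  proof (rule heq_neg_zero_if_hclass_eq)
    show "heq (- m) (Comp Gu (cx r)) (Zer [] [True, False])"
      using assms by (intro heq.I_neg3) simp_all
  qed (use assms in \<open>simp_all add: omega_dx hmor_simps\<close>)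
  then show ?thesis by simp
qed

lemma omega_I_pos5:
  assumes "0 \<le> m" "int r < m" "int q < m"
  shows "heq (- m) (omega (Comp (dx r) (Gv q))) (omega (if r = q then Id [] else Zer [] []))"
proof -
  have "heq (- m) (Comp (Gv q) (omega (dx r))) (Comp (Gv q) (cx r))"
    using assms by (intro heq_if_hclass_eq) (simp_all add: omega_dx)
  also have "heq (- m) (Comp (Gv q) (cx r)) (if q = r then Id [] else Zer [] [])"
    using assms by (intro heq.I_neg5) simp_all
  finally show ?thesis by auto
qed

lemma omega_I_neg1:
  assumes "m < 0"
  shows "heq (- m) (omega (Add (Comp tmor Gu)
             (msum [False, True] [False, True] (map (\<lambda>r. Comp (cx r) (Gv r)) [0..<nat (- m)]))))
           (omega (Id [False, True]))"
proof -
  from assms have pos: "0 \<le> - m" by simp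
  let ?sum = "\<lambda>h. msum [True, False] [True, False] (map (\<lambda>r. Comp (Gv r) (h r)) [0..<nat (- m)])"
  have "heq (- m) (Add (Comp (Smul (-1) Gu) (omega tmor)) (?sum (\<lambda>r. omega (cx r))))
      (Add (Comp Gu tmor) (?sum dx))"
  proof (rule heq.cong_add)
    show "heq (- m) (Comp (Smul (-1) Gu) (omega tmor)) (Comp Gu tmor)"
      by (rule heq_if_hclass_eq) (simp_all add: omega_tmor hmor_simps)
    show "heq (- m) (?sum (\<lambda>r. omega (cx r))) (?sum dx)"
      using assms by (intro heq_msum_cong heq_if_hclass_eq) (simp_all add: omega_cx)
    show "hty (- m) (?sum (\<lambda>r. omega (cx r))) [True, False] [True, False]"
      unfolding hty_iff_mtype using assms by (intro mtype_msum) auto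
  qed (simp add: hty_iff_mtype)
  also have "heq (- m) (Add (Comp Gu tmor) (?sum dx)) (Id [True, False])"
    using heq.I_pos1[OF pos] by simp
  finally show ?thesis by (simp add: omega_msum comp_def)
qed

lemma omega_I_neg2:
  assumes "m < 0" shows "heq (- m) (omega (Comp Gu tmor)) (omega (Id [True, False]))"
proof -
  have "heq (- m) (Comp (omega tmor) (Smul (-1) Gu)) (Comp tmor Gu)"
    by (rule heq_if_hclass_eq) (simp_all add: omega_tmor hmor_simps)
  also have "heq (- m) (Comp tmor Gu) (Id [False, True])"
    using assms by (intro heq.I_pos2) simp
  finally show ?thesis by simp
qed

lemma omega_I_neg3:
  assumes "m < 0" "int r < - m" shows "heq (- m) (omega (Comp Gu (cx r))) (omega (Zer [] [True, False]))"
proof -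
  have "heq (- m) (Comp (omega (cx r)) (Smul (-1) Gu)) (Zer [False, True] [])"
  proof (rule heq_neg_zero_if_hclass_eq)
    show "heq (- m) (Comp (dx r) Gu) (Zer [False, True] [])"
      using assms by (intro heq.I_pos4) simp_all
  qed (use assms in \<open>simp_all add: omega_cx hmor_simps\<close>)
  then show ?thesis by simp
qed

lemma omega_I_neg4:
  assumes "m < 0" "int r < - m" shows "heq (- m) (omega (Comp (Gv r) tmor)) (omega (Zer [True, False] []))"
proof -
  have "heq (- m) (Comp (omega tmor) (Gv r)) (Zer [] [False, True])"
  proof (rule heq_neg_zero_if_hclass_eq)
    show "heq (- m) (Comp tmor (Gv r)) (Zer [] [False, True])"
      using assms by (intro heq.I_pos3) simp_all
  qed (use assms in \<open>simp_all add: omega_tmor hmor_simps\<close>)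
  then show ?thesis by simp
qed

lemma omega_I_neg5:
  assumes "m < 0" "int r < - m" "int q < - m"
  shows "heq (- m) (omega (Comp (Gv r) (cx q))) (omega (if r = q then Id [] else Zer [] []))"
proof -
  have "heq (- m) (Comp (omega (cx q)) (Gv r)) (Comp (dx q) (Gv r))"
    using assms by (intro heq_if_hclass_eq) (simp_all add: omega_cx)
  also have "heq (- m) (Comp (dx q) (Gv r)) (if q = r then Id [] else Zer [] [])"
    using assms by (intro heq.I_pos5) simp_all
  finally show ?thesis by auto
qed

lemma omega_heq: "heq m f g \<Longrightarrow> heq (- m) (omega f) (omega g)"
proof (induction rule: heq.induct)
  case (eq_refl f a b) then show ?case using hty_omega by (blast intro: heq.eq_refl)
next
  case (eq_sym f g) show ?case by (rule heq.eq_sym[OF eq_sym.IH])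
next
  case (eq_trans f g h) then show ?case by (blast intro: heq.eq_trans)
next
  case (cong_comp f f' g g' b c a) then show ?case by (auto intro!: heq.cong_comp hty_omega)
next
  case (cong_tens f f' g g') then show ?case by (auto intro!: heq.cong_tens)
next
  case (cong_add f f' g g' a b) then show ?case by (auto intro!: heq.cong_add hty_omega)
next
  case (cong_smul f f' r) then show ?case by (auto intro!: heq.cong_smul)
next
  case (comp_assoc f c d g b h a) then show ?case by (auto intro!: heq.eq_sym[OF heq.comp_assoc] hty_omega)
next
  case (tens_unitl f a b) then show ?case using heq.tens_unitl[OF hty_omega[OF tens_unitl]] by simp
next
  case (tens_unitr f a b) then show ?case using heq.tens_unitr[OF hty_omega[OF tens_unitr]] by simp
next
  case (tens_id a b) then show ?case using heq.tens_id[of "- m" "swap_obj a" "swap_obj b"] by simp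
next
  case H_ss then show ?case by (rule omega_H_ss)
next
  case H_braid then show ?case by (rule omega_H_braid)
next
  case H_dot then show ?case by (rule omega_H_dot)
next
  case A_up then show ?case using heq.A_down[of "- m"] by simp
next
  case A_down then show ?case using heq.A_up[of "- m"] by simp
next
  case I_pos1 then show ?case by (rule omega_I_pos1)
next
  case I_pos2 then show ?case by (rule omega_I_pos2)
next
  case I_pos3 then show ?case by (rule omega_I_pos3)
next
  case I_pos4 then show ?case by (rule omega_I_pos4)
next
  case I_pos5 then show ?case by (rule omega_I_pos5)
next
  case I_neg1 then show ?case by (rule omega_I_neg1)
next
  case I_neg2 then show ?case by (rule omega_I_neg2)
next
  case I_neg3 then show ?case by (rule omega_I_neg3)
next
  case I_neg4 then show ?case by (rule omega_I_neg4)
next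
  case I_neg5 then show ?case by (rule omega_I_neg5)
qed (auto intro!: hty_omega heq.comp_idl heq.comp_idr
    heq.interchange heq.tens_assoc heq.add_assoc heq.add_comm heq.add_zero heq.add_neg heq.smul_add
    heq.add_smul heq.smul_smul heq.smul_one heq.comp_addl heq.comp_addr heq.comp_smull heq.comp_smulr
    heq.tens_addl heq.tens_addr heq.tens_smull heq.tens_smulr)

lemma heis_op_iso_omega: "heis_op_iso k (- k) omega"
  unfolding heis_op_iso_def
proof (intro conjI allI impI)
  fix f g :: "'k::comm_ring_1 mor" and a b
  assume "hty k f a b" "hty k g a b" "heq (- k) (omega f) (omega g)"
  then show "heq k f g"
    using omega_heq[of "- k" "omega f" "omega g"] omega_omega_heq
    by (metis heq.eq_sym heq.eq_trans minus_minus)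
next
  fix h :: "'k::comm_ring_1 mor" and a b
  assume "hty (- k) h (swap_obj b) (swap_obj a)"
  then show "\<exists>f. hty k f a b \<and> heq (- k) (omega f) h"
    using hty_omega[of "- k" h] omega_omega_heq by fastforce
next
  fix f g :: "'k::comm_ring_1 mor" and a b c
  assume "hty k f b c" "hty k g a b"
  then show "heq (- k) (omega (Comp f g)) (Comp (omega g) (omega f))"
    using heq.eq_refl[OF hty_omega[OF hty.ty_comp]] by simp
next
  fix f g :: "'k::comm_ring_1 mor" and a b c d
  assume "hty k f a b" "hty k g c d"
  then show "heq (- k) (omega (Tens f g)) (Tens (omega f) (omega g))"
    using heq.eq_refl[OF hty_omega[OF hty.ty_tens]] by simp
next
  fix f g :: "'k::comm_ring_1 mor" and a b
  assume "hty k f a b" "hty k g a b"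
  then show "heq (- k) (omega (Add f g)) (Add (omega f) (omega g))"
    using heq.eq_refl[OF hty_omega[OF hty.ty_add]] by simp
next
  fix f :: "'k::comm_ring_1 mor" and r a b
  assume "hty k f a b"
  then show "heq (- k) (omega (Smul r f)) (Smul r (omega f))"
    using heq.eq_refl[OF hty_omega[OF hty.ty_smul]] by simp
qed (auto intro: hty_omega omega_heq heq_refl_mtype)

theorem lemma2p1:
  fixes k :: int
  shows "\<exists>w :: 'k::comm_ring_1 mor \<Rightarrow> 'k mor.
           heis_op_iso k (- k) w
         \<and> heq (- k) (w Gx) xprime
         \<and> heq (- k) (w Gs) (Smul (-1) sprime)
         \<and> heq (- k) (w Gc) Gd
         \<and> heq (- k) (w Gd) Gc"
  by (intro exI[of _ omega] conjI heis_op_iso_omega) (simp_all add: heq_refl_mtype)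

end
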